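(* Let $\Bbbk$ be a field of characteristic $0$, let $\Sigma$ be a compact connected oriented surface of genus $g\ge0$ with $r+1\ge1$ boundary components, and $*\in\partial\Sigma$. Present $A=\Bbbk\pi_1(\Sigma,* )$ as the $\Bbbk$-algebra generated by $\alpha_i^{\pm1},\beta_i^{\pm1},\gamma_k^{\pm1},\Phi^{\pm1}$ ($1\le i\le g$, $1\le k\le r$) subject to $\prod^{\rightarrow}_{1\le i\le g}[\alpha_i,\beta_i]\prod^{\rightarrow}_{1\le k\le r}\gamma_k=\Phi$, where $[\alpha,\beta]=\alpha\beta\alpha^{-1}\beta^{-1}$ and products are ordered left to right by increasing index. Then $A$ has a double quasi-Poisson bracket (over $B=\Bbbk$) given by: for $1\le i\le g$, $\{\!\{\alpha_i,\alpha_i\}\!\}=\frac12(\alpha_i^2\otimes1-1\otimes\alpha_i^2)$, $\{\!\{\beta_i,\beta_i\}\!\}=-\frac12(\beta_i^2\otimes1-1\otimes\beta_i^2)$, $\{\!\{\alpha_i,\beta_i\}\!\}=\frac12(\beta_i\alpha_i\otimes1+1\otimes\alpha_i\beta_i-\alpha_i\otimes\beta_i+\beta_i\otimes\alpha_i)$; for $\phi_i\in\{\alpha_i,\beta_i\}$, $\phi_j\in\{\alpha_j,\beta_j\}$ with $1\le i<j\le g$: $\{\!\{\phi_i,\phi_j\}\!\}=\frac12(\phi_j\phi_i\otimes1+1\otimes\phi_i\phi_j-\phi_i\otimes\phi_j-\phi_j\otimes\phi_i)$; for $\phi_i\in\{\alpha_i,\beta_i\}$ and $1\le k\le r$: $\{\!\{\phi_i,\gamma_k\}\!\}=\frac12(\gamma_k\phi_i\otimes1+1\otimes\phi_i\gamma_k-\phi_i\otimes\gamma_k-\gamma_k\otimes\phi_i)$;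 for $1\le k\le r$ and $k<l\le r$: $\{\!\{\gamma_k,\gamma_k\}\!\}=\frac12(\gamma_k^2\otimes1-1\otimes\gamma_k^2)$, $\{\!\{\gamma_k,\gamma_l\}\!\}=\frac12(\gamma_l\gamma_k\otimes1+1\otimes\gamma_k\gamma_l-\gamma_k\otimes\gamma_l-\gamma_l\otimes\gamma_k)$. Furthermore, for any $a\in\{\alpha_i,\beta_i,\gamma_k\}$, $\{\!\{\Phi,a\}\!\}=\frac12(a\otimes\Phi-1\otimes\Phi a+a\Phi\otimes1-\Phi\otimes a)$. In particular $\Phi$ is a multiplicative moment map and $A$ is quasi-Hamiltonian.
   Context: $\otimes=\otimes_\Bbbk$; Sweedler notation $d=d'\otimes d''$; outer bimodule structure $x(d'\otimes d'')y=xd'\otimes d''y$. A double bracket on $A$ (over $\Bbbk$) is a $\Bbbk$-bilinear map $A\times A\to A\otimes A$ with $\{\!\{a,b\}\!\}=-\{\!\{b,a\}\!\}''\otimes\{\!\{b,a\}\!\}'$ and $\{\!\{a,bc\}\!\}=\{\!\{a,b\}\!\}c+b\{\!\{a,c\}\!\}$; it is determined by its values on generators. Triple bracket: $\{\!\{a,b,c\}\!\}=\{\!\{a,\{\!\{b,c\}\!\}'\}\!\}\otimes\{\!\{b,c\}\!\}''+\tau\{\!\{b,\{\!\{c,a\}\!\}'\}\!\}\otimes\{\!\{c,a\}\!\}''+\tau^2\{\!\{c,\{\!\{a,b\}\!\}'\}\!\}\otimes\{\!\{a,b\}\!\}''$, $\tau(x_1\otimes x_2\otimes x_3)=x_3\otimes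 x_1\otimes x_2$. With $B=\Bbbk$ (single idempotent $1$), the bracket is quasi-Poisson if $\{\!\{a,b,c\}\!\}=\frac14(ca\otimes b\otimes1-ca\otimes1\otimes b-c\otimes ab\otimes1+c\otimes a\otimes b-a\otimes b\otimes c+a\otimes1\otimes bc+1\otimes ab\otimes c-1\otimes a\otimes bc)$ for all $a,b,c$. A multiplicative moment map is an invertible $\Phi$ with $\{\!\{\Phi,a\}\!\}=\frac12(a\otimes\Phi-1\otimes\Phi a+a\Phi\otimes1-\Phi\otimes a)$ for all $a\in A$; $A$ is then quasi-Hamiltonian. *)

theory Defs
  imports Main "HOL-Library.Poly_Mapping"
begin

datatype gen = Al nat | Be nat | Ga nat

text \<open>A letter is a generator with an exponent: True = +1, False = -1.
  Group elements are reduced words.\<close>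
type_synonym gword = "(gen \<times> bool) list"

definition reduced :: "gword \<Rightarrow> bool" where
  "reduced w \<longleftrightarrow> (\<forall>i. Suc i < length w \<longrightarrow>
      \<not> (fst (w ! i) = fst (w ! Suc i) \<and> snd (w ! i) \<noteq> snd (w ! Suc i)))"

fun push :: "gen \<times> bool \<Rightarrow> gword \<Rightarrow> gword" where
  "push l [] = [l]"
| "push l (m # s) = (if fst l = fst m \<and> snd l \<noteq> snd m then s else l # m # s)"

definition reduce :: "gword \<Rightarrow> gword" where
  "reduce w = rev (foldl (\<lambda>s l. push l s) [] w)"

definition gmul :: "gword \<Rightarrow> gword \<Rightarrow> gword" where
  "gmul u v = reduce (u @ v)"

text \<open>The generators of the fundamental group of the surface of genus g with r+1
  boundary components (free on 2g+r generators).\<close>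
definition gens :: "nat \<Rightarrow> nat \<Rightarrow> gen set" where
  "gens g r = {Al i | i. 1 \<le> i \<and> i \<le> g} \<union> {Be i | i. 1 \<le> i \<and> i \<le> g}
              \<union> {Ga k | k. 1 \<le> k \<and> k \<le> r}"

text \<open>Elements of the group algebra are finitely supported functions on reduced words;
  A \<otimes> A and A \<otimes> A \<otimes> A are identified with the group algebras of F\<times>F and F\<times>F\<times>F.\<close>

definition algA :: "nat \<Rightarrow> nat \<Rightarrow> (gword \<Rightarrow>\<^sub>0 'k::zero) set" where
  "algA g r = {x. \<forall>w \<in> Poly_Mapping.keys x. reduced w \<and> fst ` set w \<subseteq> gens g r}"

definition smult :: "'k::semiring_0 \<Rightarrow> ('a \<Rightarrow>\<^sub>0 'k) \<Rightarrow> ('a \<Rightarrow>\<^sub>0 'k)" where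
  "smult c x = (\<Sum>u\<in>Poly_Mapping.keys x. Poly_Mapping.single u (c * Poly_Mapping.lookup x u))"

definition amul :: "(gword \<Rightarrow>\<^sub>0 'k::semiring_0) \<Rightarrow> (gword \<Rightarrow>\<^sub>0 'k) \<Rightarrow> (gword \<Rightarrow>\<^sub>0 'k)" where
  "amul x y = (\<Sum>u\<in>Poly_Mapping.keys x. \<Sum>v\<in>Poly_Mapping.keys y.
       Poly_Mapping.single (gmul u v) (Poly_Mapping.lookup x u * Poly_Mapping.lookup y v))"

definition gel :: "gword \<Rightarrow> (gword \<Rightarrow>\<^sub>0 'k::{zero,one})" where
  "gel w = Poly_Mapping.single w 1"

definition aone :: "gword \<Rightarrow>\<^sub>0 'k::{zero,one}" where
  "aone = gel []"

definition tens :: "(gword \<Rightarrow>\<^sub>0 'k::semiring_0) \<Rightarrow> (gword \<Rightarrow>\<^sub>0 'k) \<Rightarrow> (gword \<times> gword \<Rightarrow>\<^sub>0 'k)" where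
  "tens x y = (\<Sum>u\<in>Poly_Mapping.keys x. \<Sum>v\<in>Poly_Mapping.keys y. Poly_Mapping.single (u, v) (Poly_Mapping.lookup x u * Poly_Mapping.lookup y v))"

definition tens3 :: "(gword \<times> gword \<Rightarrow>\<^sub>0 'k::semiring_0) \<Rightarrow> (gword \<Rightarrow>\<^sub>0 'k)
     \<Rightarrow> (gword \<times> gword \<times> gword \<Rightarrow>\<^sub>0 'k)" where
  "tens3 d z = (\<Sum>(p, q)\<in>Poly_Mapping.keys d. \<Sum>w\<in>Poly_Mapping.keys z.
       Poly_Mapping.single (p, q, w) (Poly_Mapping.lookup d (p, q) * Poly_Mapping.lookup z w))"

definition t3 :: "(gword \<Rightarrow>\<^sub>0 'k::semiring_0) \<Rightarrow> (gword \<Rightarrow>\<^sub>0 'k) \<Rightarrow> (gword \<Rightarrow>\<^sub>0 'k)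
     \<Rightarrow> (gword \<times> gword \<times> gword \<Rightarrow>\<^sub>0 'k)" where
  "t3 x y z = tens3 (tens x y) z"

definition lmul :: "(gword \<Rightarrow>\<^sub>0 'k::semiring_0) \<Rightarrow> (gword \<times> gword \<Rightarrow>\<^sub>0 'k) \<Rightarrow> (gword \<times> gword \<Rightarrow>\<^sub>0 'k)" where
  "lmul x d = (\<Sum>u\<in>Poly_Mapping.keys x. \<Sum>(p, q)\<in>Poly_Mapping.keys d.
       Poly_Mapping.single (gmul u p, q) (Poly_Mapping.lookup x u * Poly_Mapping.lookup d (p, q)))"

definition rmul :: "(gword \<times> gword \<Rightarrow>\<^sub>0 'k::semiring_0) \<Rightarrow> (gword \<Rightarrow>\<^sub>0 'k) \<Rightarrow> (gword \<times> gword \<Rightarrow>\<^sub>0 'k)" where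
  "rmul d y = (\<Sum>(p, q)\<in>Poly_Mapping.keys d. \<Sum>v\<in>Poly_Mapping.keys y.
       Poly_Mapping.single (p, gmul q v) (Poly_Mapping.lookup d (p, q) * Poly_Mapping.lookup y v))"

definition swap2 :: "(gword \<times> gword \<Rightarrow>\<^sub>0 'k::semiring_0) \<Rightarrow> (gword \<times> gword \<Rightarrow>\<^sub>0 'k)" where
  "swap2 d = (\<Sum>(p, q)\<in>Poly_Mapping.keys d. Poly_Mapping.single (q, p) (Poly_Mapping.lookup d (p, q)))"

definition tau :: "(gword \<times> gword \<times> gword \<Rightarrow>\<^sub>0 'k::semiring_0) \<Rightarrow> (gword \<times> gword \<times> gword \<Rightarrow>\<^sub>0 'k)" where
  "tau d = (\<Sum>(p, q, s)\<in>Poly_Mapping.keys d. Poly_Mapping.single (s, p, q) (Poly_Mapping.lookup d (p, q, s)))"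

type_synonym 'k dbracket = "(gword \<Rightarrow>\<^sub>0 'k) \<Rightarrow> (gword \<Rightarrow>\<^sub>0 'k) \<Rightarrow> (gword \<times> gword \<Rightarrow>\<^sub>0 'k)"

definition double_bracket_on :: "(gword \<Rightarrow>\<^sub>0 'k::field) set \<Rightarrow> 'k dbracket \<Rightarrow> bool" where
  "double_bracket_on A B \<longleftrightarrow>
     (\<forall>x\<in>A. \<forall>y\<in>A. \<forall>z\<in>A. B (x + y) z = B x z + B y z) \<and>
     (\<forall>c. \<forall>x\<in>A. \<forall>y\<in>A. B (smult c x) y = smult c (B x y)) \<and>
     (\<forall>a\<in>A. \<forall>b\<in>A. B a b = - swap2 (B b a)) \<and>
     (\<forall>a\<in>A. \<forall>b\<in>A. \<forall>c\<in>A. B a (amul b c) = rmul (B a b) c + lmul b (B a c))"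

definition bracket_left :: "'k::semiring_1 dbracket \<Rightarrow> (gword \<Rightarrow>\<^sub>0 'k) \<Rightarrow> (gword \<times> gword \<Rightarrow>\<^sub>0 'k)
     \<Rightarrow> (gword \<times> gword \<times> gword \<Rightarrow>\<^sub>0 'k)" where
  "bracket_left B a d = (\<Sum>(p, q)\<in>Poly_Mapping.keys d. smult (Poly_Mapping.lookup d (p, q)) (tens3 (B a (gel p)) (gel q)))"

definition triple_bracket :: "'k::semiring_1 dbracket \<Rightarrow> (gword \<Rightarrow>\<^sub>0 'k) \<Rightarrow> (gword \<Rightarrow>\<^sub>0 'k)
     \<Rightarrow> (gword \<Rightarrow>\<^sub>0 'k) \<Rightarrow> (gword \<times> gword \<times> gword \<Rightarrow>\<^sub>0 'k)" where
  "triple_bracket B a b c =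
     bracket_left B a (B b c) + tau (bracket_left B b (B c a)) + tau (tau (bracket_left B c (B a b)))"

definition quasi_poisson_on :: "(gword \<Rightarrow>\<^sub>0 'k::field) set \<Rightarrow> 'k dbracket \<Rightarrow> bool" where
  "quasi_poisson_on A B \<longleftrightarrow> (\<forall>a\<in>A. \<forall>b\<in>A. \<forall>c\<in>A.
     triple_bracket B a b c = smult (1/4)
       (t3 (amul c a) b aone - t3 (amul c a) aone b - t3 c (amul a b) aone + t3 c a b
        - t3 a b c + t3 a aone (amul b c) + t3 aone (amul a b) c - t3 aone a (amul b c)))"

definition mm_rhs :: "(gword \<Rightarrow>\<^sub>0 'k::field) \<Rightarrow> (gword \<Rightarrow>\<^sub>0 'k) \<Rightarrow> (gword \<times> gword \<Rightarrow>\<^sub>0 'k)" where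
  "mm_rhs P a = smult (1/2) (tens a P - tens aone (amul P a) + tens (amul a P) aone - tens P a)"

definition mult_moment_map_on :: "(gword \<Rightarrow>\<^sub>0 'k::field) set \<Rightarrow> 'k dbracket \<Rightarrow> (gword \<Rightarrow>\<^sub>0 'k) \<Rightarrow> bool" where
  "mult_moment_map_on A B P \<longleftrightarrow> P \<in> A \<and>
     (\<exists>Q\<in>A. amul P Q = aone \<and> amul Q P = aone) \<and>
     (\<forall>a\<in>A. B P a = mm_rhs P a)"

definition alpha :: "nat \<Rightarrow> (gword \<Rightarrow>\<^sub>0 'k::{zero,one})" where "alpha i = gel [(Al i, True)]"
definition beta  :: "nat \<Rightarrow> (gword \<Rightarrow>\<^sub>0 'k::{zero,one})" where "beta i = gel [(Be i, True)]"
definition gamma :: "nat \<Rightarrow> (gword \<Rightarrow>\<^sub>0 'k::{zero,one})" where "gamma k = gel [(Ga k, True)]"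

definition phi_word :: "nat \<Rightarrow> nat \<Rightarrow> gword" where
  "phi_word g r = reduce (concat (map (\<lambda>i. [(Al i, True), (Be i, True), (Al i, False), (Be i, False)]) [1..<Suc g])
                          @ map (\<lambda>k. (Ga k, True)) [1..<Suc r])"

definition Phi :: "nat \<Rightarrow> nat \<Rightarrow> (gword \<Rightarrow>\<^sub>0 'k::{zero,one})" where
  "Phi g r = gel (phi_word g r)"

definition cross_val :: "(gword \<Rightarrow>\<^sub>0 'k::field) \<Rightarrow> (gword \<Rightarrow>\<^sub>0 'k) \<Rightarrow> (gword \<times> gword \<Rightarrow>\<^sub>0 'k)" where
  "cross_val x y = smult (1/2) (tens (amul y x) aone + tens aone (amul x y) - tens x y - tens y x)"

definition self_val :: "(gword \<Rightarrow>\<^sub>0 'k::field) \<Rightarrow> (gword \<times> gword \<Rightarrow>\<^sub>0 'k)" where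
  "self_val x = smult (1/2) (tens (amul x x) aone - tens aone (amul x x))"

end

(* The bracket is prescribed on positive generators,
   extended to inverse letters by the formula forced by x x^-1 = 1, to words by the Leibniz rules in
   both arguments, and bilinearly.  Since the Leibniz extension is invariant under inserting a
   cancelling pair, it is well defined on reduced words, and antisymmetry propagates from the
   generators.  Both the quasi-Poisson defect (triple bracket minus the 1/4-expression) and the
   moment map defect {{Phi, -}} - (1/2)(...) are derivations in their last argument for the outer
   bimodule structure, and the former is cyclically symmetric, so both vanish as soon as they vanish
   on positive generators.  For the moment map this is a telescoping computation along the word Phi,
   in which every letter before (after) the generator contributes the same cross term with sign +
   (-); for the quasi-Poisson property it is a finite check over the relative positions of three
   generators. *)

theory Submission
  imports Defs
begin

section \<open>Linear extension on finitely supported functions\<close>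

lemma lookup_smult [simp]: "Poly_Mapping.lookup (smult c x) k = c * Poly_Mapping.lookup x k"
proof -
  have "Poly_Mapping.lookup (smult c x) k =
        (\<Sum>u\<in>Poly_Mapping.keys x. (if u = k then c * Poly_Mapping.lookup x u else 0))"
    unfolding smult_def lookup_sum by (simp add: lookup_single when_def)
  also have "\<dots> = c * Poly_Mapping.lookup x k"
    by (cases "k \<in> Poly_Mapping.keys x") (simp_all add: sum.delta in_keys_iff)
  finally show ?thesis .
qed

lemma smult_zero_right [simp]: "smult (c::'k::comm_ring_1) 0 = 0"
  by (rule poly_mapping_eqI) simp

context
  fixes c d :: "'k::comm_ring_1"
begin

lemma smult_add_right: "smult c (x + y) = smult c x + smult c y"
  by (rule poly_mapping_eqI) (simp add: lookup_add algebra_simps)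
lemma smult_add_left: "smult (c + d) x = smult c x + smult d x"
  by (rule poly_mapping_eqI) (simp add: lookup_add algebra_simps)
lemma smult_smult [simp]: "smult c (smult d x) = smult (c * d) x"
  by (rule poly_mapping_eqI) (simp add: algebra_simps)
lemma smult_uminus_right: "smult c (- x) = - smult c x"
  by (rule poly_mapping_eqI) simp
lemma smult_uminus_left: "smult (- c) x = - smult c x"
  by (rule poly_mapping_eqI) simp
lemma smult_diff_right: "smult c (x - y) = smult c x - smult c y"
  by (rule poly_mapping_eqI) (simp add: lookup_minus algebra_simps)
lemma smult_single [simp]: "smult c (Poly_Mapping.single k a) = Poly_Mapping.single k (c * a)"
  by (rule poly_mapping_eqI) (simp add: lookup_single when_def)
lemma smult_sum: "smult c (sum f A) = (\<Sum>a\<in>A. smult c (f a))"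
  by (induct A rule: infinite_finite_induct) (simp_all add: smult_add_right)
lemma keys_smult: "Poly_Mapping.keys (smult c x) \<subseteq> Poly_Mapping.keys x"
  by (auto simp: in_keys_iff)

end

lemma smult_one [simp]: "smult (1::'k::comm_ring_1) x = x"
  by (rule poly_mapping_eqI) simp
lemma smult_zero_left [simp]: "smult (0::'k::comm_ring_1) x = 0"
  by (rule poly_mapping_eqI) simp
lemma smult_minus_one: "smult (-1::'k::comm_ring_1) x = - x"
  by (rule poly_mapping_eqI) simp

definition lin_ext :: "('a \<Rightarrow> ('b \<Rightarrow>\<^sub>0 'k::comm_ring_1)) \<Rightarrow> ('a \<Rightarrow>\<^sub>0 'k) \<Rightarrow> ('b \<Rightarrow>\<^sub>0 'k)" where
  "lin_ext F x = (\<Sum>u\<in>Poly_Mapping.keys x. smult (Poly_Mapping.lookup x u) (F u))"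

lemma lin_ext_superset:
  assumes "finite S" "Poly_Mapping.keys x \<subseteq> S"
  shows "lin_ext F x = (\<Sum>u\<in>S. smult (Poly_Mapping.lookup x u) (F u))"
  unfolding lin_ext_def
  by (rule sum.mono_neutral_left) (use assms in \<open>auto simp: in_keys_iff\<close>)

lemma lin_ext_add: "lin_ext F (x + y) = lin_ext F x + lin_ext F y"
proof -
  let ?S = "Poly_Mapping.keys x \<union> Poly_Mapping.keys y"
  have "Poly_Mapping.keys (x + y) \<subseteq> ?S" by (rule keys_add)
  then show ?thesis
    by (simp add: lin_ext_superset[of ?S] lookup_add smult_add_left sum.distrib)
qed

lemma lin_ext_zero [simp]: "lin_ext F 0 = 0"
  by (simp add: lin_ext_def)

lemma lin_ext_single [simp]: "lin_ext F (Poly_Mapping.single u c) = smult c (F u)"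
  by (cases "c = 0") (simp_all add: lin_ext_def)

lemma lin_ext_smult: "lin_ext F (smult c x) = smult c (lin_ext F x)"
proof -
  have "lin_ext F (smult c x) =
      (\<Sum>u\<in>Poly_Mapping.keys x. smult (Poly_Mapping.lookup (smult c x) u) (F u))"
    by (rule lin_ext_superset) (simp_all add: keys_smult)
  then show ?thesis by (simp add: lin_ext_def smult_sum)
qed

lemma lin_ext_uminus: "lin_ext F (- x) = - lin_ext F x"
  using lin_ext_smult[of F "-1" x] by (simp add: smult_minus_one)

lemma lin_ext_diff: "lin_ext F (x - y) = lin_ext F x - lin_ext F y"
  using lin_ext_add[of F x "- y"] by (simp add: lin_ext_uminus)

lemma lin_ext_cong: "(\<And>u. u \<in> Poly_Mapping.keys x \<Longrightarrow> F u = G u) \<Longrightarrow> lin_ext F x = lin_ext G x"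
  by (simp add: lin_ext_def)

lemma lin_ext_fun_add: "lin_ext (\<lambda>u. F u + G u) x = lin_ext F x + lin_ext G x"
  by (simp add: lin_ext_def smult_add_right sum.distrib)

lemma lin_ext_fun_smult: "lin_ext (\<lambda>u. smult c (F u)) x = smult c (lin_ext F x)"
  by (simp add: lin_ext_def smult_sum mult.commute)

lemma lin_ext_fun_uminus: "lin_ext (\<lambda>u. - F u) x = - lin_ext F x"
  by (simp add: lin_ext_def smult_uminus_right sum_negf)

lemma lin_ext_fun_zero [simp]: "lin_ext (\<lambda>u. 0) x = 0"
  by (simp add: lin_ext_def)

lemma lin_ext_singles: "lin_ext (\<lambda>u. Poly_Mapping.single u 1) x = x"
  by (rule poly_mapping_eqI)
     (simp add: lin_ext_def lookup_sum lookup_single when_def sum.delta in_keys_iff)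

lemma lin_ext_swap:
  "lin_ext (\<lambda>u. lin_ext (\<lambda>v. G u v) y) x = lin_ext (\<lambda>v. lin_ext (\<lambda>u. G u v) x) y"
proof -
  have "lin_ext (\<lambda>u. lin_ext (\<lambda>v. G u v) y) x =
    (\<Sum>u\<in>Poly_Mapping.keys x. \<Sum>v\<in>Poly_Mapping.keys y.
        smult (Poly_Mapping.lookup x u * Poly_Mapping.lookup y v) (G u v))"
    by (simp add: lin_ext_def smult_sum)
  also have "\<dots> = (\<Sum>v\<in>Poly_Mapping.keys y. \<Sum>u\<in>Poly_Mapping.keys x.
        smult (Poly_Mapping.lookup y v * Poly_Mapping.lookup x u) (G u v))"
    by (subst sum.swap) (simp add: mult.commute)
  also have "\<dots> = lin_ext (\<lambda>v. lin_ext (\<lambda>u. G u v) x) y"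
    by (simp add: lin_ext_def smult_sum)
  finally show ?thesis .
qed

lemma keys_lin_ext:
  "Poly_Mapping.keys (lin_ext F x) \<subseteq> (\<Union>u\<in>Poly_Mapping.keys x. Poly_Mapping.keys (F u))"
  unfolding lin_ext_def using keys_sum keys_smult by fastforce

definition is_linear :: "(('a \<Rightarrow>\<^sub>0 'k::comm_ring_1) \<Rightarrow> ('b \<Rightarrow>\<^sub>0 'k)) \<Rightarrow> bool" where
  "is_linear H \<longleftrightarrow> (\<forall>x y. H (x + y) = H x + H y) \<and> (\<forall>c x. H (smult c x) = smult c (H x))"

lemma is_linear_add: "is_linear H \<Longrightarrow> H (x + y) = H x + H y"
  by (simp add: is_linear_def)
lemma is_linear_smult: "is_linear H \<Longrightarrow> H (smult c x) = smult c (H x)"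
  by (simp add: is_linear_def)
lemma is_linear_zero: "is_linear H \<Longrightarrow> H 0 = 0"
  using is_linear_smult[of H 0 0] by simp
lemma is_linear_sum: "is_linear H \<Longrightarrow> H (sum f A) = (\<Sum>a\<in>A. H (f a))"
  by (induct A rule: infinite_finite_induct) (simp_all add: is_linear_zero is_linear_add)

lemma is_linear_lin_ext_comm: "is_linear H \<Longrightarrow> H (lin_ext F x) = lin_ext (\<lambda>u. H (F u)) x"
  by (simp add: lin_ext_def is_linear_sum is_linear_smult)

lemma is_linear_lin_ext [simp, intro]: "is_linear (lin_ext F)"
  by (simp add: is_linear_def lin_ext_add lin_ext_smult)
lemma is_linear_lin_ext_param [intro]:
  "(\<And>u. is_linear (G u)) \<Longrightarrow> is_linear (\<lambda>y. lin_ext (\<lambda>u. G u y) x)"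
  unfolding is_linear_def by (simp add: lin_ext_fun_add lin_ext_fun_smult)
lemma is_linear_comp [intro]: "is_linear H \<Longrightarrow> is_linear G \<Longrightarrow> is_linear (\<lambda>x. H (G x))"
  by (simp add: is_linear_def)
lemma is_linear_add_fun [intro]: "is_linear H \<Longrightarrow> is_linear G \<Longrightarrow> is_linear (\<lambda>x. H x + G x)"
  by (simp add: is_linear_def smult_add_right algebra_simps)
lemma is_linear_diff_fun [intro]: "is_linear H \<Longrightarrow> is_linear G \<Longrightarrow> is_linear (\<lambda>x. H x - G x)"
  by (simp add: is_linear_def smult_diff_right algebra_simps)
lemma is_linear_smult_fun [intro]: "is_linear H \<Longrightarrow> is_linear (\<lambda>x. smult c (H x))"
  by (simp add: is_linear_def smult_add_right mult.commute)

lemma lin_ext_lin_ext: "lin_ext G (lin_ext F x) = lin_ext (\<lambda>u. lin_ext G (F u)) x"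
  by (rule is_linear_lin_ext_comm) simp

lemma is_linear_expand: "is_linear H \<Longrightarrow> H x = lin_ext (\<lambda>u. H (Poly_Mapping.single u 1)) x"
  using is_linear_lin_ext_comm[of H "\<lambda>u. Poly_Mapping.single u 1" x] by (simp add: lin_ext_singles)

lemma is_linear_eqI:
  assumes "is_linear H" "is_linear G" "\<And>u. H (Poly_Mapping.single u 1) = G (Poly_Mapping.single u 1)"
  shows "H x = G x"
  using is_linear_expand[OF assms(1), of x] is_linear_expand[OF assms(2), of x] assms(3) by simp

definition pushforward :: "('a \<Rightarrow> 'b) \<Rightarrow> ('a \<Rightarrow>\<^sub>0 'k::comm_ring_1) \<Rightarrow> ('b \<Rightarrow>\<^sub>0 'k)" where
  "pushforward f = lin_ext (\<lambda>k. Poly_Mapping.single (f k) 1)"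

lemma pushforward_single [simp]:
  "pushforward f (Poly_Mapping.single k c) = Poly_Mapping.single (f k) c"
  by (simp add: pushforward_def)

lemma is_linear_pushforward [simp, intro]: "is_linear (pushforward f)"
  by (simp add: pushforward_def)

lemma pushforward_add: "pushforward f (x + y) = pushforward f x + pushforward f y"
  by (simp add: pushforward_def lin_ext_add)
lemma pushforward_diff: "pushforward f (x - y) = pushforward f x - pushforward f y"
  by (simp add: pushforward_def lin_ext_diff)
lemma pushforward_uminus: "pushforward f (- x) = - pushforward f x"
  by (simp add: pushforward_def lin_ext_uminus)
lemma pushforward_smult: "pushforward f (smult c x) = smult c (pushforward f x)"
  by (simp add: pushforward_def lin_ext_smult)
lemma pushforward_zero [simp]: "pushforward f 0 = 0"
  by (simp add: pushforward_def)

lemmas pushforward_linear = pushforward_add pushforward_diff pushforward_uminus pushforward_smult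

lemma pushforward_pushforward: "pushforward f (pushforward g x) = pushforward (\<lambda>k. f (g k)) x"
  by (simp add: pushforward_def lin_ext_lin_ext)

lemma pushforward_cong:
  "(\<And>k. k \<in> Poly_Mapping.keys x \<Longrightarrow> f k = g k) \<Longrightarrow> pushforward f x = pushforward g x"
  unfolding pushforward_def by (rule lin_ext_cong) simp

lemma pushforward_id: "(\<And>k. k \<in> Poly_Mapping.keys x \<Longrightarrow> f k = k) \<Longrightarrow> pushforward f x = x"
  using pushforward_cong[of x f "\<lambda>k. k"] by (simp add: pushforward_def lin_ext_singles)

lemma keys_pushforward: "Poly_Mapping.keys (pushforward f x) \<subseteq> f ` Poly_Mapping.keys x"
  using keys_lin_ext[of "\<lambda>k. Poly_Mapping.single (f k) 1" x] by (auto simp: pushforward_def)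

lemma lin_ext_pushforward: "lin_ext F (pushforward f x) = lin_ext (\<lambda>k. F (f k)) x"
  by (simp add: pushforward_def lin_ext_lin_ext)

lemma amul_lin_ext: "amul x y = lin_ext (\<lambda>u. lin_ext (\<lambda>v. Poly_Mapping.single (gmul u v) 1) y) x"
  by (simp add: amul_def lin_ext_def smult_sum)

lemma tens_lin_ext: "tens x y = lin_ext (\<lambda>u. lin_ext (\<lambda>v. Poly_Mapping.single (u, v) 1) y) x"
  by (simp add: tens_def lin_ext_def smult_sum)

lemma lmul_lin_ext:
  "lmul x d = lin_ext (\<lambda>u. lin_ext (\<lambda>(p, q). Poly_Mapping.single (gmul u p, q) 1) d) x"
  by (simp add: lmul_def lin_ext_def smult_sum case_prod_beta)

lemma rmul_lin_ext:
  "rmul d y = lin_ext (\<lambda>(p, q). lin_ext (\<lambda>v. Poly_Mapping.single (p, gmul q v) 1) y) d"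
  by (simp add: rmul_def lin_ext_def smult_sum case_prod_beta)

lemma tens3_lin_ext:
  "tens3 d z = lin_ext (\<lambda>(p, q). lin_ext (\<lambda>w. Poly_Mapping.single (p, q, w) 1) z) d"
  by (simp add: tens3_def lin_ext_def smult_sum case_prod_beta)

lemma bracket_left_lin_ext:
  "bracket_left B a d = lin_ext (\<lambda>(p, q). tens3 (B a (gel p)) (gel q)) d"
  by (simp add: bracket_left_def lin_ext_def case_prod_beta)

lemma swap2_pushforward: "swap2 d = pushforward (\<lambda>(p, q). (q, p)) d"
  by (simp add: swap2_def pushforward_def lin_ext_def case_prod_beta)

lemma tau_pushforward: "tau d = pushforward (\<lambda>(p, q, s). (s, p, q)) d"
  by (simp add: tau_def pushforward_def lin_ext_def case_prod_beta)

lemma lmul_gel: "lmul (gel u) d = pushforward (\<lambda>(p, q). (gmul u p, q)) d"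
  by (simp add: lmul_lin_ext gel_def pushforward_def case_prod_unfold)

lemma rmul_gel: "rmul d (gel v) = pushforward (\<lambda>(p, q). (p, gmul q v)) d"
  by (simp add: rmul_lin_ext gel_def pushforward_def case_prod_unfold)

lemma tens3_gel: "tens3 d (gel w) = pushforward (\<lambda>(p, q). (p, q, w)) d"
  by (simp add: tens3_lin_ext gel_def pushforward_def case_prod_unfold)

lemma amul_single [simp]:
  "amul (Poly_Mapping.single u a) (Poly_Mapping.single v b) = Poly_Mapping.single (gmul u v) (a * b :: 'k::comm_ring_1)"
  by (simp add: amul_lin_ext mult.commute)

lemma amul_gel [simp]: "amul (gel u) (gel v) = (gel (gmul u v) :: _ \<Rightarrow>\<^sub>0 'k::comm_ring_1)"
  by (simp add: gel_def)

lemma tens_gel [simp]: "tens (gel u) (gel v) = (Poly_Mapping.single (u, v) 1 :: _ \<Rightarrow>\<^sub>0 'k::comm_ring_1)"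
  by (simp add: tens_lin_ext gel_def)

lemma t3_gel [simp]:
  "t3 (gel u) (gel v) (gel w) = (Poly_Mapping.single (u, v, w) 1 :: _ \<Rightarrow>\<^sub>0 'k::comm_ring_1)"
  unfolding t3_def tens_gel by (simp add: tens3_lin_ext gel_def)

lemma is_linear_amul_left [intro]: "is_linear (\<lambda>x. amul x y)"
  by (simp add: amul_lin_ext[abs_def])
lemma is_linear_amul_right [intro]: "is_linear (\<lambda>y. amul x y)"
  unfolding amul_lin_ext by (intro is_linear_lin_ext_param is_linear_lin_ext)
lemma is_linear_tens_left [intro]: "is_linear (\<lambda>x. tens x y)"
  by (simp add: tens_lin_ext[abs_def])
lemma is_linear_tens_right [intro]: "is_linear (\<lambda>y. tens x y)"
  unfolding tens_lin_ext by (intro is_linear_lin_ext_param is_linear_lin_ext)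
lemma is_linear_lmul_left [intro]: "is_linear (\<lambda>x. lmul x d)"
  by (simp add: lmul_lin_ext[abs_def])
lemma is_linear_lmul_right [intro]: "is_linear (\<lambda>d. lmul x d)"
  unfolding lmul_lin_ext by (intro is_linear_lin_ext_param is_linear_lin_ext)
lemma is_linear_rmul_left [intro]: "is_linear (\<lambda>d. rmul d y)"
  by (simp add: rmul_lin_ext[abs_def])
lemma is_linear_rmul_right [intro]: "is_linear (\<lambda>y. rmul d y)"
  unfolding rmul_lin_ext by (rule is_linear_lin_ext_param) (auto simp: case_prod_beta)
lemma is_linear_tau [intro]: "is_linear tau"
  by (simp add: tau_pushforward[abs_def])
lemma is_linear_tens3_left [intro]: "is_linear (\<lambda>d. tens3 d z)"
  by (simp add: tens3_lin_ext[abs_def])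
lemma is_linear_tens3_right [intro]: "is_linear (\<lambda>z. tens3 d z)"
  unfolding tens3_lin_ext by (rule is_linear_lin_ext_param) (auto simp: case_prod_beta)
lemma is_linear_t3_1 [intro]: "is_linear (\<lambda>x. t3 x y z)"
  unfolding t3_def by (rule is_linear_comp[of "\<lambda>d. tens3 d z"]) auto
lemma is_linear_t3_2 [intro]: "is_linear (\<lambda>y. t3 x y z)"
  unfolding t3_def by (rule is_linear_comp[of "\<lambda>d. tens3 d z"]) auto
lemma is_linear_t3_3 [intro]: "is_linear (\<lambda>z. t3 x y z)"
  unfolding t3_def by auto
lemma is_linear_bracket_left [intro]: "is_linear (\<lambda>d. bracket_left B a d)"
  by (simp add: bracket_left_lin_ext[abs_def])

lemma tau_add: "tau (x + y) = tau x + (tau y :: _ \<Rightarrow>\<^sub>0 'k::comm_ring_1)"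
  by (simp add: tau_pushforward pushforward_add)
lemma tau_diff: "tau (x - y) = tau x - (tau y :: _ \<Rightarrow>\<^sub>0 'k::comm_ring_1)"
  by (simp add: tau_pushforward pushforward_diff)
lemma tau_uminus: "tau (- x) = - (tau x :: _ \<Rightarrow>\<^sub>0 'k::comm_ring_1)"
  by (simp add: tau_pushforward pushforward_uminus)
lemma tau_smult: "tau (smult c x) = smult (c::'k::comm_ring_1) (tau x)"
  by (simp add: tau_pushforward pushforward_smult)
lemma tau_single [simp]: "tau (Poly_Mapping.single (p, q, s) (c::'k::comm_ring_1)) = Poly_Mapping.single (s, p, q) c"
  by (simp add: tau_pushforward)
lemma tau_zero [simp]: "tau 0 = (0 :: _ \<Rightarrow>\<^sub>0 'k::comm_ring_1)"
  by (simp add: tau_pushforward)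
lemma tau_tau_tau [simp]: "tau (tau (tau x)) = (x :: _ \<Rightarrow>\<^sub>0 'k::comm_ring_1)"
  unfolding tau_pushforward pushforward_pushforward by (rule pushforward_id) (simp add: case_prod_beta)

lemmas tau_linear = tau_add tau_diff tau_uminus tau_smult

lemma swap2_add: "swap2 (x + y) = swap2 x + (swap2 y :: _ \<Rightarrow>\<^sub>0 'k::comm_ring_1)"
  by (simp add: swap2_pushforward pushforward_add)
lemma swap2_diff: "swap2 (x - y) = swap2 x - (swap2 y :: _ \<Rightarrow>\<^sub>0 'k::comm_ring_1)"
  by (simp add: swap2_pushforward pushforward_diff)
lemma swap2_uminus: "swap2 (- x) = - (swap2 x :: _ \<Rightarrow>\<^sub>0 'k::comm_ring_1)"
  by (simp add: swap2_pushforward pushforward_uminus)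
lemma swap2_smult: "swap2 (smult c x) = smult (c::'k::comm_ring_1) (swap2 x)"
  by (simp add: swap2_pushforward pushforward_smult)
lemma swap2_zero [simp]: "swap2 0 = (0 :: _ \<Rightarrow>\<^sub>0 'k::comm_ring_1)"
  by (simp add: swap2_pushforward)
lemmas swap2_linear = swap2_add swap2_diff swap2_uminus swap2_smult

section \<open>Free reduction of words\<close>

definition inv_letter :: "gen \<times> bool \<Rightarrow> gen \<times> bool" where
  "inv_letter l = (fst l, \<not> snd l)"

definition inv_word :: "gword \<Rightarrow> gword" where
  "inv_word w = rev (map inv_letter w)"

lemma inv_letter_inv_letter [simp]: "inv_letter (inv_letter l) = l"
  by (simp add: inv_letter_def)

lemma inv_letter_eq_iff: "m = inv_letter l \<longleftrightarrow> l = inv_letter m"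
  by (auto simp: inv_letter_def)

lemma reduced_Nil [simp]: "reduced []"
  by (simp add: reduced_def)

lemma reduced_single [simp]: "reduced [l]"
  by (simp add: reduced_def)

lemma reduced_Cons_Cons: "reduced (l # m # w) \<longleftrightarrow> m \<noteq> inv_letter l \<and> reduced (m # w)"
proof -
  have *: "(\<forall>i. Suc i < Suc (Suc n) \<longrightarrow> Q i) \<longleftrightarrow> Q 0 \<and> (\<forall>i. Suc i < Suc n \<longrightarrow> Q (Suc i))" for Q n
    by (metis Suc_less_eq less_Suc_eq_0_disj zero_less_Suc nat.exhaust)
  have "fst l = fst m \<and> snd l \<noteq> snd m \<longleftrightarrow> m = inv_letter l"
    by (cases l; cases m) (auto simp: inv_letter_def)
  then show ?thesis
    unfolding reduced_def length_Cons * by simp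
qed

lemma reduced_Cons: "reduced (a # w) \<longleftrightarrow> reduced w \<and> (w \<noteq> [] \<longrightarrow> hd w \<noteq> inv_letter a)"
  by (cases w) (auto simp: reduced_Cons_Cons)

lemma reduced_ConsD: "reduced (l # w) \<Longrightarrow> reduced w"
  by (simp add: reduced_Cons)

lemma reduced_append:
  "reduced (u @ v) \<longleftrightarrow> reduced u \<and> reduced v \<and>
      (u \<noteq> [] \<longrightarrow> v \<noteq> [] \<longrightarrow> hd v \<noteq> inv_letter (last u))"
proof (induct u)
  case (Cons a u)
  then show ?case by (cases u; cases v) (auto simp: reduced_Cons_Cons)
qed simp

lemma reduced_rev: "reduced (rev w) \<longleftrightarrow> reduced w"
proof (induct w)
  case (Cons a w)
  have "reduced (rev (a # w)) \<longleftrightarrow> reduced (rev w) \<and> (w \<noteq> [] \<longrightarrow> a \<noteq> inv_letter (hd w))"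
    by (simp add: reduced_append last_rev)
  also have "\<dots> \<longleftrightarrow> reduced (a # w)"
    using Cons.hyps by (auto simp: reduced_Cons inv_letter_eq_iff)
  finally show ?case .
qed simp

lemma reduced_inv_word: "reduced w \<Longrightarrow> reduced (inv_word w)"
proof (induct w)
  case (Cons a w)
  then show ?case
    by (cases w) (auto simp: inv_word_def reduced_append reduced_Cons_Cons inv_letter_def dest: reduced_ConsD)
qed (simp add: inv_word_def)

lemma reduced_positive: "\<forall>l\<in>set w. snd l \<Longrightarrow> reduced w"
proof (induct w)
  case (Cons a w)
  then show ?case by (cases w) (auto simp: reduced_Cons_Cons inv_letter_def)
qed simp

lemma push_Cons: "push l (m # s) = (if m = inv_letter l then s else l # m # s)"
  by (cases l; cases m) (auto simp: inv_letter_def)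

declare push.simps(2) [simp del] push_Cons [simp]

text \<open>\<^const>\<open>reduce\<close> keeps the reduced prefix read so far on a stack, in reverse order.\<close>

lemma reduced_push: "reduced s \<Longrightarrow> reduced (push l s)"
  by (cases s) (auto simp: reduced_Cons_Cons dest: reduced_ConsD)

lemma reduced_foldl_push: "reduced s \<Longrightarrow> reduced (foldl (\<lambda>s l. push l s) s w)"
  by (induct w arbitrary: s) (auto simp: reduced_push)

lemma reduced_reduce [simp]: "reduced (reduce w)"
  by (simp add: reduce_def reduced_rev reduced_foldl_push)

lemma foldl_push_reduced:
  "reduced (rev s @ w) \<Longrightarrow> foldl (\<lambda>s l. push l s) s w = rev w @ s"
proof (induct w arbitrary: s)
  case (Cons a w)
  have "push a s = a # s"
  proof (cases s)
    case (Cons m s')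
    have "reduced (rev s' @ [m] @ a # w)" using Cons.prems \<open>s = m # s'\<close> by simp
    then have "reduced ([m] @ a # w)" unfolding reduced_append[of "rev s'"] by blast
    then have "m \<noteq> inv_letter a" by (simp add: reduced_Cons_Cons inv_letter_eq_iff)
    then show ?thesis using \<open>s = m # s'\<close> by simp
  qed simp
  then show ?case using Cons by simp
qed simp

lemma reduce_id [simp]: "reduced w \<Longrightarrow> reduce w = w"
  using foldl_push_reduced[of "[]" w] by (simp add: reduce_def)

lemma set_reduce: "set (reduce w) \<subseteq> set w"
proof -
  have "set (foldl (\<lambda>s l. push l s) s w) \<subseteq> set s \<union> set w" for s
  proof (induct w arbitrary: s)
    case (Cons a w)
    have "set (push a s) \<subseteq> insert a (set s)" by (cases s) auto
    with Cons[of "push a s"] show ?case by auto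
  qed simp
  from this[of "[]"] show ?thesis by (simp add: reduce_def)
qed

definition cancel_invariant :: "(gword \<Rightarrow> 'b) \<Rightarrow> bool" where
  "cancel_invariant F \<longleftrightarrow> (\<forall>u v l. F (u @ [l, inv_letter l] @ v) = F (u @ v))"

lemma cancel_invariant_reduce:
  assumes "cancel_invariant F"
  shows "F (reduce w) = F w"
proof -
  have "F (rev (foldl (\<lambda>s l. push l s) s w)) = F (rev s @ w)" for s
  proof (induct w arbitrary: s)
    case (Cons m w)
    have "F (rev (push m s) @ w) = F (rev s @ m # w)"
    proof (cases s)
      case (Cons n s')
      then show ?thesis
        using assms[unfolded cancel_invariant_def, rule_format, of "rev s'" n w]
        by (auto simp: inv_letter_eq_iff)
    qed simp
    then show ?case using Cons[of "push m s"] by simp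
  qed simp
  from this[of "[]"] show ?thesis by (simp add: reduce_def)
qed

lemma reduce_cancel: "reduce (u @ [l, inv_letter l] @ v) = reduce (u @ v)"
proof -
  have "push (inv_letter l) (push l s) = s" if "reduced s" for s
  proof (cases s)
    case (Cons m s')
    show ?thesis
    proof (cases "m = inv_letter l")
      case True
      have "push (inv_letter l) s' = inv_letter l # s'"
      proof (cases s')
        case (Cons n s'')
        have "n \<noteq> inv_letter m" using that Cons \<open>s = m # s'\<close> by (simp add: reduced_Cons_Cons)
        then show ?thesis using Cons True by simp
      qed simp
      then show ?thesis using Cons True by simp
    qed (use Cons in simp)
  qed simp
  then show ?thesis by (simp add: reduce_def reduced_foldl_push)
qed

lemma cancel_invariant_reduce_append: "cancel_invariant (\<lambda>w. reduce (u @ w @ v))"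
  unfolding cancel_invariant_def using reduce_cancel by (metis append.assoc)

lemma reduce_append_reduce: "reduce (u @ reduce v @ w) = reduce (u @ v @ w)"
  using cancel_invariant_reduce[OF cancel_invariant_reduce_append[of u w], of v] by simp

lemma reduce_reduce_append: "reduce (reduce u @ v) = reduce (u @ v)"
  using reduce_append_reduce[of "[]" u v] by simp

lemma reduce_append_reduce_right: "reduce (u @ reduce v) = reduce (u @ v)"
  using reduce_append_reduce[of u v "[]"] by simp

lemma reduce_append_append_reduce: "reduce (u @ v @ reduce w) = reduce (u @ v @ w)"
  using reduce_append_reduce_right[of "u @ v" w] by simp

lemma reduce_Cons_reduce: "reduce (a # reduce v) = reduce (a # v)"
  using reduce_append_reduce_right[of "[a]" v] by simp

lemma reduce_Cons_reduce_append: "reduce (a # reduce u @ v) = reduce (a # u @ v)"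
  using reduce_append_reduce[of "[a]" u v] by simp

lemmas reduce_append_simps =
  reduce_append_reduce reduce_reduce_append reduce_append_reduce_right reduce_append_append_reduce
  reduce_Cons_reduce reduce_Cons_reduce_append

lemma reduce_pair_cancel [simp]: "reduce [l, inv_letter l] = []" "reduce [inv_letter l, l] = []"
  using reduce_cancel[of "[]" l "[]"] reduce_cancel[of "[]" "inv_letter l" "[]"] by simp_all

lemma reduce_inv_word_cancel: "reduce (u @ inv_word u @ v) = reduce v"
proof (induct u rule: rev_induct)
  case (snoc a u)
  have "reduce ((u @ [a]) @ inv_word (u @ [a]) @ v) = reduce (u @ [a, inv_letter a] @ inv_word u @ v)"
    by (simp add: inv_word_def)
  also have "\<dots> = reduce (u @ inv_word u @ v)" by (rule reduce_cancel)
  finally show ?case using snoc by simp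
qed (simp add: inv_word_def)

lemma gmul_assoc: "gmul (gmul u v) w = gmul u (gmul v w)"
  by (simp add: gmul_def reduce_reduce_append reduce_append_reduce_right)

lemma gmul_reduced [simp]: "reduced (gmul u v)"
  by (simp add: gmul_def)

lemma gmul_Nil_left [simp]: "reduced u \<Longrightarrow> gmul [] u = u"
  by (simp add: gmul_def)

lemma gmul_Nil_right [simp]: "reduced u \<Longrightarrow> gmul u [] = u"
  by (simp add: gmul_def)

lemma gmul_inv_word: "gmul u (inv_word u) = []"
  using reduce_inv_word_cancel[of u "[]"] by (simp add: gmul_def)

lemma gmul_inv_word_left: "gmul (inv_word u) u = []"
  using gmul_inv_word[of "inv_word u"] by (simp add: inv_word_def rev_map comp_def)

lemma gmul_Cons: "reduced (l # w) \<Longrightarrow> gmul [l] w = l # w"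
  by (simp add: gmul_def)

lemma gmul_positive: "\<forall>l\<in>set u. snd l \<Longrightarrow> \<forall>l\<in>set v. snd l \<Longrightarrow> gmul u v = u @ v"
  unfolding gmul_def by (rule reduce_id, rule reduced_positive) auto

lemma gmul_reduce_left [simp]: "gmul (reduce u) v = gmul u v"
  by (simp add: gmul_def reduce_reduce_append)

lemma gmul_reduce_right [simp]: "gmul u (reduce v) = gmul u v"
  by (simp add: gmul_def reduce_append_reduce_right)

definition act :: "gword \<Rightarrow> gword \<Rightarrow> gword \<Rightarrow> gword \<Rightarrow>
    (gword \<times> gword \<Rightarrow>\<^sub>0 'k::comm_ring_1) \<Rightarrow> (gword \<times> gword \<Rightarrow>\<^sub>0 'k)" where
  "act a b c d = pushforward (\<lambda>(p, q). (gmul a (gmul p b), gmul c (gmul q d)))"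

definition act3 :: "gword \<Rightarrow> gword \<Rightarrow>
    (gword \<times> gword \<times> gword \<Rightarrow>\<^sub>0 'k::comm_ring_1) \<Rightarrow> (gword \<times> gword \<times> gword \<Rightarrow>\<^sub>0 'k)" where
  "act3 c d = pushforward (\<lambda>(p, q, s). (gmul c p, q, gmul s d))"

definition reduced2 :: "(gword \<times> gword \<Rightarrow>\<^sub>0 'k::comm_ring_1) \<Rightarrow> bool" where
  "reduced2 X \<longleftrightarrow> (\<forall>k\<in>Poly_Mapping.keys X. reduced (fst k) \<and> reduced (snd k))"

definition reduced3 :: "(gword \<times> gword \<times> gword \<Rightarrow>\<^sub>0 'k::comm_ring_1) \<Rightarrow> bool" where
  "reduced3 X \<longleftrightarrow>
     (\<forall>k\<in>Poly_Mapping.keys X. reduced (fst k) \<and> reduced (fst (snd k)) \<and> reduced (snd (snd k)))"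

lemma act_single [simp]:
  "act a b c d (Poly_Mapping.single (p, q) k) = Poly_Mapping.single (gmul a (gmul p b), gmul c (gmul q d)) k"
  by (simp add: act_def)

lemma act_single_reduce:
  "act a b c d (Poly_Mapping.single (p, q) k) = Poly_Mapping.single (reduce (a @ p @ b), reduce (c @ q @ d)) k"
  by (simp add: gmul_def reduce_append_simps)

lemma act_act [simp]:
  "act a b c d (act a' b' c' d' X) = act (a @ a') (b' @ b) (c @ c') (d' @ d) X"
  unfolding act_def pushforward_pushforward
  by (rule pushforward_cong) (simp add: case_prod_beta gmul_def reduce_append_simps)

lemma act_cong:
  assumes "reduce a = reduce a'" "reduce b = reduce b'" "reduce c = reduce c'" "reduce d = reduce d'"
  shows "act a b c d X = act a' b' c' d' X"
proof -
  have "gmul a z = gmul a' z" "gmul z b = gmul z b'" "gmul c z = gmul c' z" "gmul z d = gmul z d'" for z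
    using assms by (metis gmul_reduce_left gmul_reduce_right)+
  then show ?thesis unfolding act_def by simp
qed

lemma act_Nil: "reduced2 X \<Longrightarrow> act [] [] [] [] X = X"
  unfolding act_def reduced2_def by (rule pushforward_id) auto

lemma act_add: "act a b c d (X + Y) = act a b c d X + act a b c d Y"
  by (simp add: act_def pushforward_add)
lemma act_diff: "act a b c d (X - Y) = act a b c d X - act a b c d Y"
  by (simp add: act_def pushforward_diff)
lemma act_uminus: "act a b c d (- X) = - act a b c d X"
  by (simp add: act_def pushforward_uminus)
lemma act_smult: "act a b c d (smult k X) = smult k (act a b c d X)"
  by (simp add: act_def pushforward_smult)
lemma act_zero [simp]: "act a b c d 0 = 0"
  by (simp add: act_def)

lemmas act_linear = act_add act_diff act_uminus act_smult

lemma swap2_act: "swap2 (act a b c d X) = act c d a b (swap2 X)"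
  unfolding act_def swap2_pushforward pushforward_pushforward
  by (rule pushforward_cong) (simp add: case_prod_beta)

lemma lmul_gel_act: "reduced2 X \<Longrightarrow> lmul (gel u) X = act u [] [] [] X"
  unfolding lmul_gel act_def reduced2_def by (rule pushforward_cong) auto

lemma rmul_gel_act: "reduced2 X \<Longrightarrow> rmul X (gel v) = act [] [] [] v X"
  unfolding rmul_gel act_def reduced2_def by (rule pushforward_cong) auto

lemma act3_single [simp]:
  "act3 c d (Poly_Mapping.single (p, q, s) k) = Poly_Mapping.single (gmul c p, q, gmul s d) k"
  by (simp add: act3_def)
lemma act3_add: "act3 c d (X + Y) = act3 c d X + act3 c d Y"
  by (simp add: act3_def pushforward_add)
lemma act3_diff: "act3 c d (X - Y) = act3 c d X - act3 c d Y"
  by (simp add: act3_def pushforward_diff)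
lemma act3_smult: "act3 c d (smult k X) = smult k (act3 c d X)"
  by (simp add: act3_def pushforward_smult)
lemma act3_zero [simp]: "act3 c d 0 = 0"
  by (simp add: act3_def)
lemma is_linear_act3 [intro]: "is_linear (act3 c d)"
  by (simp add: act3_def)

lemma act3_act3_Nil: "act3 [] d' (act3 [] d X) = act3 [] (d @ d') X"
  unfolding act3_def pushforward_pushforward
  by (rule pushforward_cong) (auto simp: gmul_def reduce_reduce_append)

lemma act3_reduced_Nil: "reduce d = [] \<Longrightarrow> reduced3 X \<Longrightarrow> act3 [] d X = X"
  unfolding act3_def reduced3_def
  by (rule pushforward_id) (auto simp: gmul_def reduce_append_reduce_right[of _ d, symmetric])

lemma reduced2_pushforward:
  "(\<And>k. k \<in> Poly_Mapping.keys X \<Longrightarrow> reduced (fst (f k)) \<and> reduced (snd (f k))) \<Longrightarrow>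
   reduced2 (pushforward f X)"
  unfolding reduced2_def using keys_pushforward[of f X] by blast

lemma reduced3_pushforward:
  "(\<And>k. k \<in> Poly_Mapping.keys X \<Longrightarrow>
      reduced (fst (f k)) \<and> reduced (fst (snd (f k))) \<and> reduced (snd (snd (f k)))) \<Longrightarrow>
   reduced3 (pushforward f X)"
  unfolding reduced3_def using keys_pushforward[of f X] by blast

lemma reduced3_lin_ext:
  "(\<And>k. k \<in> Poly_Mapping.keys X \<Longrightarrow> reduced3 (F k)) \<Longrightarrow> reduced3 (lin_ext F X)"
  unfolding reduced3_def using keys_lin_ext[of F X] by blast

lemma reduced2_act [simp]: "reduced2 (act a b c d X)"
  unfolding act_def by (rule reduced2_pushforward) (simp add: case_prod_beta)

lemma reduced2_add [simp]: "reduced2 X \<Longrightarrow> reduced2 Y \<Longrightarrow> reduced2 (X + Y)"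
  unfolding reduced2_def using keys_add[of X Y] by blast
lemma reduced2_uminus [simp]: "reduced2 X \<Longrightarrow> reduced2 (- X)"
  unfolding reduced2_def by (auto simp: in_keys_iff)
lemma reduced2_diff [simp]: "reduced2 X \<Longrightarrow> reduced2 Y \<Longrightarrow> reduced2 (X - Y)"
  using reduced2_add[of X "- Y"] by simp
lemma reduced2_smult [simp]: "reduced2 X \<Longrightarrow> reduced2 (smult k X)"
  unfolding reduced2_def by (auto simp: in_keys_iff)
lemma reduced2_zero [simp]: "reduced2 0"
  by (simp add: reduced2_def)
lemma reduced2_single [simp]: "reduced p \<Longrightarrow> reduced q \<Longrightarrow> reduced2 (Poly_Mapping.single (p, q) c)"
  by (simp add: reduced2_def)
lemma reduced3_add [simp]: "reduced3 X \<Longrightarrow> reduced3 Y \<Longrightarrow> reduced3 (X + Y)"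
  unfolding reduced3_def using keys_add[of X Y] by blast
lemma reduced3_uminus [simp]: "reduced3 X \<Longrightarrow> reduced3 (- X)"
  unfolding reduced3_def by (auto simp: in_keys_iff)
lemma reduced3_diff [simp]: "reduced3 X \<Longrightarrow> reduced3 Y \<Longrightarrow> reduced3 (X - Y)"
  using reduced3_add[of X "- Y"] by simp
lemma reduced3_smult [simp]: "reduced3 X \<Longrightarrow> reduced3 (smult k X)"
  unfolding reduced3_def by (auto simp: in_keys_iff)
lemma reduced3_single [simp]:
  "reduced p \<Longrightarrow> reduced q \<Longrightarrow> reduced s \<Longrightarrow> reduced3 (Poly_Mapping.single (p, q, s) c)"
  by (simp add: reduced3_def)
lemma reduced3_tau [simp]: "reduced3 X \<Longrightarrow> reduced3 (tau X)"
  unfolding tau_pushforward by (rule reduced3_pushforward) (auto simp: reduced3_def)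

text \<open>On an inverse letter the value is forced by \<open>0 = f [] = f (y\<inverse> y) = right [y] (f [y\<inverse>])\<close>;
  this is where \<open>right_inverse\<close> is needed.\<close>

lemma outer_derivation_zero:
  fixes f :: "gword \<Rightarrow> 'b::ab_group_add"
    and right left :: "gword \<Rightarrow> 'b \<Rightarrow> 'b"
  assumes deriv: "\<And>v w. reduced v \<Longrightarrow> reduced w \<Longrightarrow> f (gmul v w) = right w (f v) + left v (f w)"
    and f_Nil: "f [] = 0"
    and right_zero: "\<And>w. right w 0 = 0" and left_zero: "\<And>v. left v 0 = 0"
    and right_inverse: "\<And>y. right [(y, False)] (right [(y, True)] (f [(y, False)])) = f [(y, False)]"
    and positive: "\<And>y. y \<in> S \<Longrightarrow> f [(y, True)] = 0"
    and w: "reduced w" "fst ` set w \<subseteq> S"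
  shows "f w = 0"
proof -
  have letter: "f [l] = 0" if "fst l \<in> S" for l
  proof (cases l)
    case (Pair y t)
    show ?thesis
    proof (cases t)
      case False
      have "0 = f (gmul [(y, False)] [(y, True)])"
        using f_Nil reduce_pair_cancel(2)[of "(y, True)"] by (simp add: gmul_def inv_letter_def)
      also have "\<dots> = right [(y, True)] (f [(y, False)])"
        using deriv[of "[(y, False)]" "[(y, True)]"] positive[of y] that Pair left_zero by simp
      finally show ?thesis
        using right_inverse[of y] right_zero Pair False by metis
    qed (use positive that Pair in simp)
  qed
  show ?thesis
    using w
  proof (induct w)
    case (Cons l w)
    then have "reduced w" "fst l \<in> S" by (auto dest: reduced_ConsD)
    have "f (l # w) = f (gmul [l] w)"
      using Cons.prems by (simp add: gmul_Cons)
    also have "\<dots> = right w (f [l]) + left [l] (f w)"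
      using \<open>reduced w\<close> by (simp add: deriv)
    finally show ?case
      using Cons \<open>reduced w\<close> letter[OF \<open>fst l \<in> S\<close>] right_zero left_zero by simp
  qed (simp add: f_Nil)
qed

section \<open>The bracket on words\<close>

text \<open>Generators are ordered by blocks: the handle \<open>i\<close> carries \<open>\<alpha>\<^sub>i, \<beta>\<^sub>i\<close> and comes before the
  boundary loops \<open>\<gamma>\<^sub>k\<close>.\<close>

fun block :: "gen \<Rightarrow> nat \<times> nat" where
  "block (Al i) = (0, i)" | "block (Be i) = (0, i)" | "block (Ga k) = (1, k)"

definition block_less :: "gen \<Rightarrow> gen \<Rightarrow> bool" where
  "block_less x y \<longleftrightarrow> fst (block x) < fst (block y) \<or>
     (fst (block x) = fst (block y) \<and> snd (block x) < snd (block y))"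

fun is_alpha :: "gen \<Rightarrow> bool" where
  "is_alpha (Al i) = True" | "is_alpha (Be i) = False" | "is_alpha (Ga k) = False"

fun is_beta :: "gen \<Rightarrow> bool" where
  "is_beta (Al i) = False" | "is_beta (Be i) = True" | "is_beta (Ga k) = False"

lemma block_less_irrefl: "block_less x y \<Longrightarrow> x \<noteq> y"
  by (auto simp: block_less_def)

lemma block_less_block: "block_less x y \<Longrightarrow> block x \<noteq> block y"
  by (auto simp: block_less_def)

lemma block_less_asym: "block_less x y \<Longrightarrow> \<not> block_less y x"
  by (auto simp: block_less_def)

abbreviation pos :: "gen \<Rightarrow> gen \<times> bool" where "pos x \<equiv> (x, True)"

abbreviation cross_pattern :: "gen \<Rightarrow> gen \<Rightarrow> 'k::field \<Rightarrow> (gword \<times> gword \<Rightarrow>\<^sub>0 'k)" where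
  "cross_pattern x y c \<equiv> Poly_Mapping.single ([pos y, pos x], []) 1 + Poly_Mapping.single ([], [pos x, pos y]) 1
      - Poly_Mapping.single ([pos x], [pos y]) 1 + Poly_Mapping.single ([pos y], [pos x]) c"

definition cross_sign :: "gen \<Rightarrow> gen \<Rightarrow> 'k::field" where
  "cross_sign x y =
     (if block x = block y then (if is_alpha x then 1 else -1) else if block_less x y then 1 else -1)"

definition swap_coeff :: "gen \<Rightarrow> gen \<Rightarrow> 'k::field" where
  "swap_coeff x y = (if block x = block y then 1 else -1)"

definition self_sign :: "gen \<Rightarrow> 'k::field" where
  "self_sign x = (if is_beta x then -1 else 1)"

definition gen_bracket :: "gen \<Rightarrow> gen \<Rightarrow> (gword \<times> gword \<Rightarrow>\<^sub>0 'k::field)" where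
  "gen_bracket x y = (if x = y then
      smult (self_sign x / 2)
        (Poly_Mapping.single ([pos x, pos x], []) 1 - Poly_Mapping.single ([], [pos x, pos x]) 1)
    else smult (cross_sign x y / 2) (cross_pattern x y (swap_coeff x y)))"

lemma reduced2_gen_bracket [simp]: "reduced2 (gen_bracket x y)"
  by (simp add: gen_bracket_def reduced_Cons_Cons inv_letter_def)

lemma gen_bracket_antisym: "gen_bracket x y = - swap2 (gen_bracket y x :: _ \<Rightarrow>\<^sub>0 'k::field)"
proof (cases "x = y")
  case True
  then show ?thesis
    by (simp add: gen_bracket_def swap2_pushforward pushforward_linear smult_uminus_right[symmetric])
next
  case False
  have "cross_sign y x = - (cross_sign x y :: 'k)" "swap_coeff y x = (swap_coeff x y :: 'k)"
    using False by (cases x; cases y; auto simp: cross_sign_def swap_coeff_def block_less_def)+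
  then show ?thesis
    using False by (simp add: gen_bracket_def swap2_pushforward pushforward_linear smult_uminus_left
        algebra_simps)
qed

lemma gen_bracket_self: "gen_bracket x x = smult (self_sign x / 2)
    (Poly_Mapping.single ([pos x, pos x], []) 1 - Poly_Mapping.single ([], [pos x, pos x]) 1)"
  by (simp add: gen_bracket_def)

lemma gen_bracket_less: "block_less x y \<Longrightarrow> gen_bracket x y = smult (1/2) (cross_pattern x y (-1))"
  using block_less_irrefl[of x y] block_less_block[of x y]
  by (simp add: gen_bracket_def cross_sign_def swap_coeff_def)

lemma gen_bracket_greater: "block_less y x \<Longrightarrow> gen_bracket x y = smult (-1/2) (cross_pattern x y (-1))"
  using block_less_irrefl[of y x] block_less_block[of y x] block_less_asym[of y x]
  by (auto simp: gen_bracket_def cross_sign_def swap_coeff_def)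

lemma gen_bracket_alpha_beta:
  "is_alpha x \<Longrightarrow> is_beta y \<Longrightarrow> block x = block y \<Longrightarrow> gen_bracket x y = smult (1/2) (cross_pattern x y 1)"
  by (cases x; cases y) (auto simp: gen_bracket_def cross_sign_def swap_coeff_def)

lemma gen_bracket_beta_alpha:
  "is_beta x \<Longrightarrow> is_alpha y \<Longrightarrow> block x = block y \<Longrightarrow> gen_bracket x y = smult (-1/2) (cross_pattern x y 1)"
  by (cases x; cases y) (auto simp: gen_bracket_def cross_sign_def swap_coeff_def)

text \<open>On an inverse letter \<open>y\<inverse>\<close> the bracket is forced by \<open>y y\<inverse> = 1\<close>:
  the tensor is multiplied by \<open>-1\<close> and by \<open>y\<inverse>\<close> on the appropriate inner sides.\<close>

definition inv_part :: "gen \<times> bool \<Rightarrow> gword" where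
  "inv_part l = (if snd l then [] else [l])"

definition letter_sign :: "gen \<times> bool \<Rightarrow> 'k::field" where
  "letter_sign l = (if snd l then 1 else -1)"

definition letter_bracket :: "gen \<times> bool \<Rightarrow> gen \<times> bool \<Rightarrow> (gword \<times> gword \<Rightarrow>\<^sub>0 'k::field)" where
  "letter_bracket l m = smult (letter_sign l * letter_sign m)
     (act (inv_part m) (inv_part l) (inv_part l) (inv_part m) (gen_bracket (fst l) (fst m)))"

lemma letter_bracket_positive [simp]: "letter_bracket (pos x) (pos y) = gen_bracket x y"
  by (simp add: letter_bracket_def inv_part_def letter_sign_def act_Nil)

lemma reduced2_letter_bracket [simp]: "reduced2 (letter_bracket l m)"
  by (simp add: letter_bracket_def)

lemma letter_bracket_antisym: "letter_bracket l m = - swap2 (letter_bracket m l)"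
  by (simp add: letter_bracket_def gen_bracket_antisym[of "fst l"] swap2_linear swap2_act
      act_linear smult_uminus_right mult.commute)

lemma letter_bracket_cancel:
  "act [] [] [] [inv_letter l] (letter_bracket m l) + act [l] [] [] [] (letter_bracket m (inv_letter l)) = 0"
proof -
  let ?b = "gen_bracket (fst m) (fst l)" and ?e = "inv_part m" and ?e' = "inv_part (inv_letter l)"
  have "act [] [] [] [inv_letter l] (letter_bracket m l) =
      smult (letter_sign m * letter_sign l) (act (inv_part l) ?e ?e (inv_part l @ [inv_letter l]) ?b)"
    by (simp add: letter_bracket_def act_smult)
  moreover have "act [l] [] [] [] (letter_bracket m (inv_letter l)) =
      - smult (letter_sign m * letter_sign l) (act ([l] @ ?e') ?e ?e ?e' ?b)"
    by (simp add: letter_bracket_def act_smult letter_sign_def inv_letter_def smult_uminus_left)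
  moreover have "act (inv_part l) ?e ?e (inv_part l @ [inv_letter l]) ?b = act ([l] @ ?e') ?e ?e ?e' ?b"
    using reduce_pair_cancel(1)[of l] by (intro act_cong) (auto simp: inv_part_def inv_letter_def)
  ultimately show ?thesis by (metis add.right_inverse)
qed

fun letter_word_bracket :: "gen \<times> bool \<Rightarrow> gword \<Rightarrow> (gword \<times> gword \<Rightarrow>\<^sub>0 'k::field)" where
  "letter_word_bracket l [] = 0"
| "letter_word_bracket l (m # w) =
     act [] [] [] w (letter_bracket l m) + act [m] [] [] [] (letter_word_bracket l w)"

fun word_bracket :: "gword \<Rightarrow> gword \<Rightarrow> (gword \<times> gword \<Rightarrow>\<^sub>0 'k::field)" where
  "word_bracket [] w = 0"
| "word_bracket (m # u) w = act [] u [] [] (letter_word_bracket m w) + act [] [] [m] [] (word_bracket u w)"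

lemma reduced2_letter_word_bracket [simp]: "reduced2 (letter_word_bracket l w)"
  by (cases w) simp_all

lemma reduced2_word_bracket [simp]: "reduced2 (word_bracket u w)"
  by (cases u) simp_all

lemma cancel_invariant_outer_derivation:
  fixes f :: "gword \<Rightarrow> (gword \<times> gword \<Rightarrow>\<^sub>0 'k::comm_ring_1)"
  assumes append: "\<And>u v. f (u @ v) = act [] [] [] v (f u) + act u [] [] [] (f v)"
    and pair: "\<And>m. f [m, inv_letter m] = 0"
  shows "cancel_invariant f"
  unfolding cancel_invariant_def
proof (intro allI)
  fix u v m
  have "f (u @ [m, inv_letter m] @ v) =
      act [] [] [] ([m, inv_letter m] @ v) (f u) + act (u @ [m, inv_letter m]) [] [] [] (f v)"
    by (simp add: append[of u] append[of "[m, inv_letter m]"] pair act_add del: append_Cons)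
  also have "\<dots> = act [] [] [] v (f u) + act u [] [] [] (f v)"
    using reduce_cancel[of "[]" m v] reduce_cancel[of u m "[]"]
    by (intro arg_cong2[where f = "(+)"] act_cong) simp_all
  also have "\<dots> = f (u @ v)" by (simp add: append)
  finally show "f (u @ [m, inv_letter m] @ v) = f (u @ v)" .
qed

lemma letter_word_bracket_append:
  "letter_word_bracket l (w @ w') =
     act [] [] [] w' (letter_word_bracket l w) + act w [] [] [] (letter_word_bracket l w')"
  by (induct w) (simp_all add: act_Nil act_add algebra_simps)

lemma letter_word_bracket_single: "letter_word_bracket l [m] = letter_bracket l m"
  by (simp add: act_Nil)

lemma letter_word_bracket_reduce: "letter_word_bracket l (reduce w) = letter_word_bracket l w"
proof (rule cancel_invariant_reduce, rule cancel_invariant_outer_derivation)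
  show "letter_word_bracket l [m, inv_letter m] = 0" for m
    using letter_bracket_cancel[of m l] by (simp add: act_Nil)
qed (rule letter_word_bracket_append)

lemma word_bracket_Nil_right [simp]: "word_bracket u [] = 0"
  by (induct u) simp_all

lemma word_bracket_append_right:
  "word_bracket u (w @ w') = act [] [] [] w' (word_bracket u w) + act w [] [] [] (word_bracket u w')"
  by (induct u) (simp_all add: letter_word_bracket_append act_add algebra_simps del: letter_word_bracket.simps)

lemma word_bracket_append_left:
  "word_bracket (u @ u') w = act [] u' [] [] (word_bracket u w) + act [] [] u [] (word_bracket u' w)"
  by (induct u) (simp_all add: act_Nil act_add algebra_simps del: letter_word_bracket.simps)

lemma word_bracket_single: "word_bracket [l] w = letter_word_bracket l w"
  by (simp add: act_Nil del: letter_word_bracket.simps)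

lemma word_bracket_reduce_right: "word_bracket u (reduce w) = word_bracket u w"
proof (rule cancel_invariant_reduce, rule cancel_invariant_outer_derivation)
  show "word_bracket u [m, inv_letter m] = 0" for m
    by (induct u) (simp_all add: letter_word_bracket_reduce[of _ "[m, inv_letter m]", symmetric]
        del: letter_word_bracket.simps(2))
qed (rule word_bracket_append_right)

lemma letter_word_bracket_antisym:
  "letter_word_bracket m w = - swap2 (word_bracket w [m] :: _ \<Rightarrow>\<^sub>0 'k::field)"
proof (induct w)
  case (Cons n w)
  have "- swap2 (word_bracket (n # w) [m] :: _ \<Rightarrow>\<^sub>0 'k) =
      act [] [] [] w (- swap2 (letter_bracket n m)) + act [n] [] [] [] (- swap2 (word_bracket w [m]))"
    by (simp add: letter_word_bracket_single swap2_linear swap2_act act_linear del: letter_word_bracket.simps)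
  also have "\<dots> = letter_word_bracket m (n # w)"
    by (simp only: letter_word_bracket.simps(2) letter_bracket_antisym[of m n] Cons.hyps)
  finally show ?case by simp
qed simp

lemma word_bracket_antisym: "word_bracket u w = - swap2 (word_bracket w u :: _ \<Rightarrow>\<^sub>0 'k::field)"
proof (induct u)
  case (Cons m u)
  have "word_bracket w (m # u) =
      act [] [] [] u (word_bracket w [m]) + act [m] [] [] [] (word_bracket w u :: _ \<Rightarrow>\<^sub>0 'k)"
    using word_bracket_append_right[of w "[m]" u] by simp
  then have "- swap2 (word_bracket w (m # u) :: _ \<Rightarrow>\<^sub>0 'k) =
      act [] u [] [] (- swap2 (word_bracket w [m])) + act [] [] [m] [] (- swap2 (word_bracket w u))"
    by (simp add: swap2_linear swap2_act act_linear)

  also have "\<dots> = word_bracket (m # u) w"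
    by (simp only: word_bracket.simps(2) letter_word_bracket_antisym[of m w] Cons.hyps)
  finally show ?case by simp
qed simp

lemma word_bracket_reduce_left: "word_bracket (reduce u) w = word_bracket u w"
  by (metis word_bracket_antisym word_bracket_reduce_right)

lemma word_bracket_gmul_right:
  "word_bracket u (gmul v w) = act [] [] [] w (word_bracket u v) + act v [] [] [] (word_bracket u w)"
  by (simp add: gmul_def word_bracket_reduce_right word_bracket_append_right)

lemma word_bracket_gmul_left:
  "word_bracket (gmul u v) w = act [] v [] [] (word_bracket u w) + act [] [] u [] (word_bracket v w)"
  by (simp add: gmul_def word_bracket_reduce_left word_bracket_append_left)

definition surface_bracket :: "'k::field dbracket" where
  "surface_bracket x y = lin_ext (\<lambda>u. lin_ext (\<lambda>v. word_bracket u v) y) x"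

lemma surface_bracket_gel [simp]: "surface_bracket (gel u) (gel v) = word_bracket u v"
  by (simp add: surface_bracket_def gel_def)

lemma is_linear_surface_bracket_left [intro]: "is_linear (\<lambda>x. surface_bracket x y)"
  by (simp add: surface_bracket_def[abs_def])

lemma is_linear_surface_bracket_right [intro]: "is_linear (surface_bracket x)"
  unfolding surface_bracket_def by (intro is_linear_lin_ext_param is_linear_lin_ext)

lemma surface_bracket_antisym: "surface_bracket a b = - swap2 (surface_bracket b a)"
proof -
  have "- swap2 (surface_bracket b a) = lin_ext (\<lambda>v. lin_ext (\<lambda>u. - swap2 (word_bracket v u)) a) b"
    unfolding surface_bracket_def
    by (simp add: is_linear_lin_ext_comm[of "\<lambda>x. - swap2 x"] is_linear_def swap2_linear smult_uminus_right
        lin_ext_fun_uminus)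
  also have "\<dots> = surface_bracket a b"
    unfolding surface_bracket_def word_bracket_antisym[symmetric] by (rule lin_ext_swap[symmetric])
  finally show ?thesis ..
qed

lemma surface_bracket_leibniz: "surface_bracket a (amul b c) = rmul (surface_bracket a b) c + lmul b (surface_bracket a c)"
proof -
  have words: "surface_bracket (gel u) (gel (gmul v w)) =
      rmul (surface_bracket (gel u) (gel v)) (gel w) + lmul (gel v) (surface_bracket (gel u) (gel w))" for u v w
    by (simp add: word_bracket_gmul_right rmul_gel_act lmul_gel_act)
  have letters_left: "surface_bracket (gel u) (amul (gel v) c) =
      rmul (surface_bracket (gel u) (gel v)) c + lmul (gel v) (surface_bracket (gel u) c)" for u v
    by (rule is_linear_eqI[OF is_linear_comp[OF is_linear_surface_bracket_right is_linear_amul_right]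
          is_linear_add_fun[OF is_linear_rmul_right
            is_linear_comp[OF is_linear_lmul_right is_linear_surface_bracket_right]]])
       (simp add: words[unfolded gel_def] gel_def)
  have letter_left: "surface_bracket (gel u) (amul b c) =
      rmul (surface_bracket (gel u) b) c + lmul b (surface_bracket (gel u) c)" for u
    by (rule is_linear_eqI[OF is_linear_comp[OF is_linear_surface_bracket_right is_linear_amul_left]
          is_linear_add_fun[OF is_linear_comp[OF is_linear_rmul_left is_linear_surface_bracket_right]
            is_linear_lmul_left]])
       (simp add: letters_left[unfolded gel_def] gel_def)
  show ?thesis
    by (rule is_linear_eqI[OF is_linear_surface_bracket_left
          is_linear_add_fun[OF is_linear_comp[OF is_linear_rmul_left is_linear_surface_bracket_left]
            is_linear_comp[OF is_linear_lmul_right is_linear_surface_bracket_left]]])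
       (simp add: letter_left[unfolded gel_def] gel_def)
qed

theorem double_bracket_surface_bracket: "double_bracket_on A surface_bracket"
  unfolding double_bracket_on_def
  by (auto simp: is_linear_add[OF is_linear_surface_bracket_left] is_linear_smult[OF is_linear_surface_bracket_left]
      surface_bracket_leibniz intro: surface_bracket_antisym)

section \<open>The quasi-Poisson property\<close>

fun word_bracket_left :: "gword \<Rightarrow> gword \<times> gword \<Rightarrow> (gword \<times> gword \<times> gword \<Rightarrow>\<^sub>0 'k::field)" where
  "word_bracket_left a (p, q) = pushforward (\<lambda>(x, y). (x, y, q)) (word_bracket a p)"

lemma bracket_left_gel: "bracket_left surface_bracket (gel a) X = lin_ext (word_bracket_left a) X"
  unfolding bracket_left_lin_ext by (rule lin_ext_cong) (auto simp: tens3_gel)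

lemma pushforward_cong_reduced2:
  assumes "reduced2 X" "\<And>x y. reduced x \<Longrightarrow> reduced y \<Longrightarrow> f (x, y) = g (x, y)"
  shows "pushforward f X = pushforward g X"
  using assms unfolding reduced2_def by (intro pushforward_cong) auto

lemma lin_ext_cong_reduced2:
  assumes "reduced2 X" "\<And>x y. reduced x \<Longrightarrow> reduced y \<Longrightarrow> F (x, y) = G (x, y)"
  shows "lin_ext F X = lin_ext G X"
  using assms unfolding reduced2_def by (intro lin_ext_cong) auto

lemma lin_ext_act:
  "lin_ext F (act a b c d X) = lin_ext (\<lambda>(p, q). F (gmul a (gmul p b), gmul c (gmul q d))) X"
  unfolding act_def lin_ext_pushforward by (simp add: case_prod_unfold)

lemma pushforward_act:
  "pushforward f (act a b c d X) = pushforward (\<lambda>(p, q). f (gmul a (gmul p b), gmul c (gmul q d))) X"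
  unfolding act_def pushforward_pushforward by (simp add: case_prod_unfold)

definition cross_term :: "gword \<Rightarrow> gword \<Rightarrow> gword \<Rightarrow> gword \<Rightarrow> (gword \<times> gword \<times> gword \<Rightarrow>\<^sub>0 'k::field)" where
  "cross_term a b c d =
     lin_ext (\<lambda>(p, q). pushforward (\<lambda>(x, y). (x, gmul y p, q)) (word_bracket a c)) (word_bracket b d)"

definition cross_term2 :: "gword \<Rightarrow> gword \<Rightarrow> gword \<Rightarrow> gword \<Rightarrow> (gword \<times> gword \<times> gword \<Rightarrow>\<^sub>0 'k::field)" where
  "cross_term2 a b c d =
     lin_ext (\<lambda>(p, q). pushforward (\<lambda>(x, y). (q, gmul p x, y)) (word_bracket b d)) (word_bracket c a)"

lemma tau_lin_ext: "tau (lin_ext F X) = lin_ext (\<lambda>k. tau (F k)) X"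
  by (rule is_linear_lin_ext_comm) auto

lemma act3_lin_ext: "act3 c d (lin_ext F X) = lin_ext (\<lambda>k. act3 c d (F k)) X"
  by (rule is_linear_lin_ext_comm) auto

lemma triple_summand1_gmul:
  "lin_ext (word_bracket_left a) (word_bracket b (gmul c d)) =
     act3 [] d (lin_ext (word_bracket_left a) (word_bracket b c)) +
     act3 c [] (lin_ext (word_bracket_left a) (word_bracket b d)) + (cross_term a b c d :: _ \<Rightarrow>\<^sub>0 'k::field)"
proof -
  have "lin_ext (word_bracket_left a) (act [] [] [] d (word_bracket b c)) =
      (act3 [] d (lin_ext (word_bracket_left a) (word_bracket b c)) :: _ \<Rightarrow>\<^sub>0 'k)"
    unfolding lin_ext_act act3_lin_ext
    by (rule lin_ext_cong_reduced2)
       (auto simp: act3_def pushforward_pushforward intro!: pushforward_cong_reduced2)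
  moreover have "lin_ext (word_bracket_left a) (act c [] [] [] (word_bracket b d)) =
      act3 c [] (lin_ext (word_bracket_left a) (word_bracket b d)) + (cross_term a b c d :: _ \<Rightarrow>\<^sub>0 'k)"
    unfolding lin_ext_act act3_lin_ext cross_term_def lin_ext_fun_add[symmetric]
    by (rule lin_ext_cong_reduced2)
       (auto simp: word_bracket_gmul_right act3_def pushforward_add pushforward_act pushforward_pushforward
         add.commute intro!: arg_cong2[where f = "(+)"] pushforward_cong_reduced2)
  ultimately show ?thesis
    by (simp add: word_bracket_gmul_right lin_ext_add add.assoc)
qed

lemma triple_summand2_gmul:
  "tau (lin_ext (word_bracket_left b) (word_bracket (gmul c d) a)) =
     act3 [] d (tau (lin_ext (word_bracket_left b) (word_bracket c a))) +
     act3 c [] (tau (lin_ext (word_bracket_left b) (word_bracket d a))) +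
     (cross_term2 a b c d :: _ \<Rightarrow>\<^sub>0 'k::field)"
proof -
  have "tau (lin_ext (word_bracket_left b) (act [] d [] [] (word_bracket c a))) =
      act3 [] d (tau (lin_ext (word_bracket_left b) (word_bracket c a))) + (cross_term2 a b c d :: _ \<Rightarrow>\<^sub>0 'k)"
    unfolding lin_ext_act tau_lin_ext act3_lin_ext cross_term2_def lin_ext_fun_add[symmetric]
    by (rule lin_ext_cong_reduced2)
       (auto simp: word_bracket_gmul_right tau_pushforward act3_def pushforward_add pushforward_act
         pushforward_pushforward intro!: arg_cong2[where f = "(+)"] pushforward_cong_reduced2)
  moreover have "tau (lin_ext (word_bracket_left b) (act [] [] c [] (word_bracket d a))) =
      (act3 c [] (tau (lin_ext (word_bracket_left b) (word_bracket d a))) :: _ \<Rightarrow>\<^sub>0 'k)"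
    unfolding lin_ext_act tau_lin_ext act3_lin_ext
    by (rule lin_ext_cong_reduced2)
       (auto simp: tau_pushforward act3_def pushforward_pushforward intro!: pushforward_cong_reduced2)
  ultimately show ?thesis
    by (simp add: word_bracket_gmul_left lin_ext_add tau_add algebra_simps)
qed

lemma triple_summand3_gmul:
  "tau (tau (lin_ext (word_bracket_left (gmul c d)) X)) =
     act3 [] d (tau (tau (lin_ext (word_bracket_left c) X))) +
     (act3 c [] (tau (tau (lin_ext (word_bracket_left d) X))) :: _ \<Rightarrow>\<^sub>0 'k::field)"
  unfolding tau_lin_ext act3_lin_ext lin_ext_fun_add[symmetric]
proof (rule lin_ext_cong)
  fix k :: "gword \<times> gword"
  show "tau (tau (word_bracket_left (gmul c d) k)) =
      (act3 [] d (tau (tau (word_bracket_left c k))) + act3 c [] (tau (tau (word_bracket_left d k))) :: _ \<Rightarrow>\<^sub>0 'k)"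
    by (cases k)
       (auto simp: word_bracket_gmul_left tau_pushforward act3_def pushforward_add pushforward_act
         pushforward_pushforward intro!: arg_cong2[where f = "(+)"] pushforward_cong_reduced2)
qed

text \<open>The Leibniz rule produces \<open>{{a, c}}\<acute> \<otimes> {{a, c}}\<acute>\<acute> {{b, d}}\<acute> \<otimes> {{b, d}}\<acute>\<acute>\<close> in the first summand
  and its negative, by antisymmetry, in the second.\<close>

lemma cross_term2_eq: "cross_term2 a b c d = - (cross_term a b c d :: _ \<Rightarrow>\<^sub>0 'k::field)"
proof -
  have "cross_term2 a b c d =
      lin_ext (\<lambda>(p, q). pushforward (\<lambda>(x, y). (q, gmul p x, y)) (word_bracket b d))
        (- pushforward (\<lambda>(p, q). (q, p)) (word_bracket a c) :: _ \<Rightarrow>\<^sub>0 'k)"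
    unfolding cross_term2_def by (simp add: word_bracket_antisym[of c a] swap2_pushforward)
  also have "\<dots> = - lin_ext (\<lambda>(x, y). pushforward (\<lambda>(p, q). (x, gmul y p, q)) (word_bracket b d)) (word_bracket a c)"
    by (simp add: lin_ext_uminus lin_ext_pushforward case_prod_unfold)
  also have "\<dots> = - cross_term a b c d"
    unfolding cross_term_def pushforward_def
    using lin_ext_swap[of "\<lambda>u v. Poly_Mapping.single (fst u, gmul (snd u) (fst v), snd v) 1"
        "word_bracket b d" "word_bracket a c"]
    by (simp add: case_prod_unfold)
  finally show ?thesis .
qed

definition qp_rhs_word :: "gword \<Rightarrow> gword \<Rightarrow> gword \<Rightarrow> (gword \<times> gword \<times> gword \<Rightarrow>\<^sub>0 'k::field)" where
  "qp_rhs_word a b c = smult (1/4)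
     (Poly_Mapping.single (gmul c a, b, []) 1 - Poly_Mapping.single (gmul c a, [], b) 1
      - Poly_Mapping.single (c, gmul a b, []) 1 + Poly_Mapping.single (c, a, b) 1
      - Poly_Mapping.single (a, b, c) 1 + Poly_Mapping.single (a, [], gmul b c) 1
      + Poly_Mapping.single ([], gmul a b, c) 1 - Poly_Mapping.single ([], a, gmul b c) 1)"

definition qp_defect :: "gword \<Rightarrow> gword \<Rightarrow> gword \<Rightarrow> (gword \<times> gword \<times> gword \<Rightarrow>\<^sub>0 'k::field)" where
  "qp_defect a b c =
     lin_ext (word_bracket_left a) (word_bracket b c) + tau (lin_ext (word_bracket_left b) (word_bracket c a))
     + tau (tau (lin_ext (word_bracket_left c) (word_bracket a b))) - qp_rhs_word a b c"

lemma triple_bracket_gel: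
  "triple_bracket surface_bracket (gel a) (gel b) (gel c) = qp_defect a b c + qp_rhs_word a b c"
  by (simp add: triple_bracket_def bracket_left_gel qp_defect_def)

lemma qp_rhs_word_gmul:
  assumes "reduced a" "reduced b" "reduced c" "reduced d"
  shows "qp_rhs_word a b (gmul c d) = act3 [] d (qp_rhs_word a b c) + act3 c [] (qp_rhs_word a b d)"
  unfolding qp_rhs_word_def act3_smult smult_add_right[symmetric]
  using assms by (simp add: act3_add act3_diff gmul_assoc algebra_simps)

lemma qp_defect_gmul:
  assumes "reduced a" "reduced b" "reduced c" "reduced d"
  shows "qp_defect a b (gmul c d) = act3 [] d (qp_defect a b c) + act3 c [] (qp_defect a b d)"
  unfolding qp_defect_def triple_summand1_gmul triple_summand2_gmul triple_summand3_gmul qp_rhs_word_gmul[OF assms]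
    cross_term2_eq act3_add act3_diff
  by (simp add: algebra_simps)

lemma qp_rhs_word_cyclic: "qp_rhs_word c a b = tau (qp_rhs_word a b c)"
  unfolding qp_rhs_word_def tau_smult by (simp add: tau_add tau_diff algebra_simps)

lemma qp_defect_cyclic: "qp_defect c a b = tau (qp_defect a b c)"
  unfolding qp_defect_def tau_add tau_diff tau_tau_tau qp_rhs_word_cyclic[of c a b]
  by (simp add: algebra_simps)

lemma qp_defect_Nil: "reduced a \<Longrightarrow> reduced b \<Longrightarrow> qp_defect a b [] = (0 :: _ \<Rightarrow>\<^sub>0 'k::field)"
proof -
  have "word_bracket_left [] = (\<lambda>k. 0 :: _ \<Rightarrow>\<^sub>0 'k)"
    by (rule ext) auto
  then show "reduced a \<Longrightarrow> reduced b \<Longrightarrow> ?thesis"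
    by (simp add: qp_defect_def qp_rhs_word_def)
qed

lemma reduced3_qp_defect: "reduced a \<Longrightarrow> reduced b \<Longrightarrow> reduced c \<Longrightarrow> reduced3 (qp_defect a b c)"
proof -
  have "reduced3 (lin_ext (word_bracket_left a) (word_bracket b c))" for a b c
  proof (rule reduced3_lin_ext)
    fix k assume "k \<in> Poly_Mapping.keys (word_bracket b c)"
    with reduced2_word_bracket[of b c] have "reduced (snd k)" by (auto simp: reduced2_def)
    then show "reduced3 (word_bracket_left a k)"
      using reduced2_word_bracket[of a "fst k"]
      by (cases k) (auto simp: reduced2_def intro!: reduced3_pushforward)
  qed
  then show "reduced a \<Longrightarrow> reduced b \<Longrightarrow> reduced c \<Longrightarrow> ?thesis"
    unfolding qp_defect_def qp_rhs_word_def
    by (intro reduced3_add reduced3_diff reduced3_tau reduced3_smult reduced3_single) simp_all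
qed

lemma qp_defect_zero_last:
  assumes "reduced a" "reduced b" "reduced c" and letters: "\<And>z. qp_defect a b [pos z] = (0 :: _ \<Rightarrow>\<^sub>0 'k::field)"
  shows "qp_defect a b c = (0 :: _ \<Rightarrow>\<^sub>0 'k::field)"
proof (rule outer_derivation_zero[where S = UNIV and right = "\<lambda>w. act3 [] w" and left = "\<lambda>v. act3 v []"])
  show "act3 [] [(y, False)] (act3 [] [pos y] (qp_defect a b [(y, False)])) =
      (qp_defect a b [(y, False)] :: _ \<Rightarrow>\<^sub>0 'k)"
    for y
    using reduce_pair_cancel(1)[of "pos y"] assms(1,2)
    by (simp add: act3_act3_Nil act3_reduced_Nil reduced3_qp_defect inv_letter_def)
  show "qp_defect a b [pos y] = (0 :: _ \<Rightarrow>\<^sub>0 'k)" for y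
    by (rule letters)
  show "qp_defect a b (gmul v w) = act3 [] w (qp_defect a b v) + act3 v [] (qp_defect a b w)"
    if "reduced v" "reduced w" for v w
    using assms that by (simp add: qp_defect_gmul)
  show "qp_defect a b [] = 0"
    using assms by (simp add: qp_defect_Nil)
qed (use assms in simp_all)

text \<open>Cyclic symmetry moves each argument in turn into the last slot.\<close>

lemma qp_defect_zero:
  assumes letters: "\<And>x y z. qp_defect [pos x] [pos y] [pos z] = (0 :: _ \<Rightarrow>\<^sub>0 'k::field)"
    and "reduced a" "reduced b" "reduced c"
  shows "qp_defect a b c = (0 :: _ \<Rightarrow>\<^sub>0 'k)"
proof -
  have rotate: "qp_defect a b c = (0 :: _ \<Rightarrow>\<^sub>0 'k)" if "qp_defect c a b = (0 :: _ \<Rightarrow>\<^sub>0 'k)" for a b c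
  proof -
    have "qp_defect a b c = tau (tau (qp_defect c a b :: _ \<Rightarrow>\<^sub>0 'k))"
      by (simp only: qp_defect_cyclic[of c a b] tau_tau_tau)
    with that show ?thesis by simp
  qed
  have two_letters: "qp_defect [pos x] [pos y] w = (0 :: _ \<Rightarrow>\<^sub>0 'k)" if "reduced w" for x y w
    by (rule qp_defect_zero_last) (simp_all add: that letters)
  have one_letter: "qp_defect [pos x] v w = (0 :: _ \<Rightarrow>\<^sub>0 'k)" if "reduced v" "reduced w" for x v w
  proof (rule rotate, rule qp_defect_zero_last)
    show "qp_defect w [pos x] [pos z] = (0 :: _ \<Rightarrow>\<^sub>0 'k)" for z
      by (rule rotate, rule rotate) (simp add: two_letters that)
  qed (use that in simp_all)
  show ?thesis
  proof (rule rotate, rule qp_defect_zero_last)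
    show "qp_defect c a [pos z] = (0 :: _ \<Rightarrow>\<^sub>0 'k)" for z
      by (rule rotate) (simp add: one_letter assms)
  qed (use assms in simp_all)
qed

text \<open>The defect on three positive letters only depends on how the letters are pairwise related,
  and only 38 of the \<open>6\<^sup>3\<close> combinations of relations are consistent.\<close>

datatype letter_relation = Same | Same_beta | Alpha_beta | Beta_alpha | Before | After

definition relation :: "gen \<Rightarrow> gen \<Rightarrow> letter_relation" where
  "relation x y =
     (if x = y then (if is_beta x then Same_beta else Same)
      else if block x = block y then (if is_alpha x then Alpha_beta else Beta_alpha)
      else if block_less x y then Before else After)"

lemma relation_iff:
  "relation x y = Same \<longleftrightarrow> x = y \<and> \<not> is_beta x"
  "relation x y = Same_beta \<longleftrightarrow> x = y \<and> is_beta x"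
  "relation x y = Alpha_beta \<longleftrightarrow> is_alpha x \<and> is_beta y \<and> block x = block y"
  "relation x y = Beta_alpha \<longleftrightarrow> is_beta x \<and> is_alpha y \<and> block x = block y"
  "relation x y = Before \<longleftrightarrow> block_less x y"
  "relation x y = After \<longleftrightarrow> block_less y x"
  by (cases x; cases y; auto simp: relation_def block_less_def)+

lemma relation_triples:
  "(relation x y, relation y z, relation z x) \<in> set
    [(Alpha_beta, Beta_alpha, Same), (Alpha_beta, Same_beta, Beta_alpha), (Alpha_beta, After, Before),
     (Alpha_beta, Before, After), (Beta_alpha, Alpha_beta, Same_beta), (Beta_alpha, Same, Alpha_beta),
     (Beta_alpha, After, Before), (Beta_alpha, Before, After), (Same_beta, Beta_alpha, Alpha_beta),
     (Same_beta, Same_beta, Same_beta), (Same_beta, After, Before), (Same_beta, Before, After),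
     (Same, Alpha_beta, Beta_alpha), (Same, Same, Same), (Same, After, Before), (Same, Before, After),
     (After, Alpha_beta, Before), (After, Beta_alpha, Before), (After, Same_beta, Before),
     (After, Same, Before), (After, After, Before), (After, Before, Alpha_beta),
     (After, Before, Beta_alpha), (After, Before, Same_beta), (After, Before, Same),
     (After, Before, After), (After, Before, Before), (Before, Alpha_beta, After),
     (Before, Beta_alpha, After), (Before, Same_beta, After), (Before, Same, After),
     (Before, After, Alpha_beta), (Before, After, Beta_alpha), (Before, After, Same_beta),
     (Before, After, Same), (Before, After, After), (Before, After, Before), (Before, Before, After)]"
  by (cases x; cases y; cases z) (auto simp: relation_def block_less_def)

lemmas qp_letter_simps = tau_linear tau_single act_linear act_Nil smult_add_right smult_diff_right
  smult_uminus_right lin_ext_add lin_ext_diff lin_ext_smult lin_ext_uminus lin_ext_single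
  pushforward_linear pushforward_add pushforward_single word_bracket_single gmul_positive
  gen_bracket_self gen_bracket_less gen_bracket_greater gen_bracket_alpha_beta gen_bracket_beta_alpha
  self_sign_def

lemma qp_defect_letters: "qp_defect [pos x] [pos y] [pos z] = (0 :: _ \<Rightarrow>\<^sub>0 'k::field_char_0)"
  using relation_triples[of x y z]
  unfolding qp_defect_def qp_rhs_word_def
  by (simp only: set_simps insert_iff empty_iff prod.inject relation_iff)
     (elim disjE conjE; clarify?; simp add: qp_letter_simps; (simp add: single_uminus algebra_simps)?)

definition qp_rhs :: "(gword \<Rightarrow>\<^sub>0 'k::field) \<Rightarrow> (gword \<Rightarrow>\<^sub>0 'k) \<Rightarrow> (gword \<Rightarrow>\<^sub>0 'k) \<Rightarrow>
    (gword \<times> gword \<times> gword \<Rightarrow>\<^sub>0 'k)" where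
  "qp_rhs a b c = smult (1/4)
     (t3 (amul c a) b aone - t3 (amul c a) aone b - t3 c (amul a b) aone + t3 c a b
      - t3 a b c + t3 a aone (amul b c) + t3 aone (amul a b) c - t3 aone a (amul b c))"

lemma qp_rhs_gel: "qp_rhs (gel a) (gel b) (gel c) = qp_rhs_word a b c"
  by (simp add: qp_rhs_def qp_rhs_word_def aone_def)

lemma is_linear_qp_rhs:
  "is_linear (\<lambda>a. qp_rhs a b c)" "is_linear (\<lambda>b. qp_rhs a b c)" "is_linear (\<lambda>c. qp_rhs a b c)"
  unfolding qp_rhs_def
  by (intro is_linear_smult_fun is_linear_add_fun is_linear_diff_fun is_linear_comp[OF is_linear_t3_1]
      is_linear_comp[OF is_linear_t3_2] is_linear_comp[OF is_linear_t3_3] is_linear_amul_left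
      is_linear_amul_right is_linear_t3_1 is_linear_t3_2 is_linear_t3_3)+

lemma is_linear_triple_bracket:
  "is_linear (\<lambda>a. triple_bracket surface_bracket a b c :: _ \<Rightarrow>\<^sub>0 'k::field)"
  "is_linear (\<lambda>b. triple_bracket surface_bracket a b c :: _ \<Rightarrow>\<^sub>0 'k)"
  "is_linear (\<lambda>c. triple_bracket surface_bracket a b c :: _ \<Rightarrow>\<^sub>0 'k)"
proof -
  have left: "is_linear (\<lambda>a. bracket_left surface_bracket a d)" for d :: "_ \<Rightarrow>\<^sub>0 'k::field"
    unfolding bracket_left_lin_ext
    by (rule is_linear_lin_ext_param)
       (auto simp: case_prod_beta intro!: is_linear_comp[OF is_linear_tens3_left is_linear_surface_bracket_left])
  show "is_linear (\<lambda>a. triple_bracket surface_bracket a b c :: _ \<Rightarrow>\<^sub>0 'k)"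
    "is_linear (\<lambda>b. triple_bracket surface_bracket a b c :: _ \<Rightarrow>\<^sub>0 'k)"
    "is_linear (\<lambda>c. triple_bracket surface_bracket a b c :: _ \<Rightarrow>\<^sub>0 'k)"
    unfolding triple_bracket_def
    by (intro is_linear_add_fun left is_linear_comp[OF is_linear_tau] is_linear_comp[OF is_linear_bracket_left]
        is_linear_surface_bracket_right is_linear_surface_bracket_left)+
qed

lemma triple_bracket_reduced_words:
  assumes "reduced u" "reduced v" "reduced w"
  shows "triple_bracket surface_bracket (gel u) (gel v) (gel w) =
    (qp_rhs (gel u) (gel v) (gel w) :: _ \<Rightarrow>\<^sub>0 'k::field_char_0)"
  using qp_defect_zero[OF qp_defect_letters assms] by (simp add: triple_bracket_gel qp_rhs_gel)

theorem quasi_poisson_surface_bracket: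
  "quasi_poisson_on (algA g r) (surface_bracket :: ('k::field_char_0) dbracket)"
  unfolding quasi_poisson_on_def qp_rhs_def[symmetric]
proof (intro ballI)
  fix a b c :: "gword \<Rightarrow>\<^sub>0 'k"
  assume "a \<in> algA g r" "b \<in> algA g r" "c \<in> algA g r"
  then have reduced_keys: "\<forall>u\<in>Poly_Mapping.keys a. reduced u" "\<forall>v\<in>Poly_Mapping.keys b. reduced v"
    "\<forall>w\<in>Poly_Mapping.keys c. reduced w"
    by (auto simp: algA_def)
  let ?expand = "\<lambda>T. lin_ext (\<lambda>u. lin_ext (\<lambda>v. lin_ext (\<lambda>w. T (gel u) (gel v) (gel w)) c) b) a"
  have "triple_bracket surface_bracket a b c = ?expand (triple_bracket surface_bracket)"
    unfolding gel_def
    by (subst is_linear_expand[OF is_linear_triple_bracket(1)], subst is_linear_expand[OF is_linear_triple_bracket(2)],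
        subst is_linear_expand[OF is_linear_triple_bracket(3)]) (rule refl)
  also have "\<dots> = ?expand qp_rhs"
    by (intro lin_ext_cong) (simp add: triple_bracket_reduced_words reduced_keys)
  also have "\<dots> = qp_rhs a b c"
    unfolding gel_def
    by (subst (2) is_linear_expand[OF is_linear_qp_rhs(1)], subst (2) is_linear_expand[OF is_linear_qp_rhs(2)],
        subst (2) is_linear_expand[OF is_linear_qp_rhs(3)]) (rule refl)
  finally show "triple_bracket surface_bracket a b c = qp_rhs a b c" .
qed

section \<open>The multiplicative moment map\<close>

definition mm_word :: "gword \<Rightarrow> gword \<Rightarrow> (gword \<times> gword \<Rightarrow>\<^sub>0 'k::field)" where
  "mm_word F v = smult (1/2) (Poly_Mapping.single (v, F) 1 - Poly_Mapping.single ([], gmul F v) 1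
     + Poly_Mapping.single (gmul v F, []) 1 - Poly_Mapping.single (F, v) 1)"

definition cross_word :: "gword \<Rightarrow> gen \<Rightarrow> (gword \<times> gword \<Rightarrow>\<^sub>0 'k::field)" where
  "cross_word L x = smult (1/2) (Poly_Mapping.single (gmul [pos x] L, []) 1
     + Poly_Mapping.single ([], gmul L [pos x]) 1
     - Poly_Mapping.single (reduce L, [pos x]) 1 - Poly_Mapping.single ([pos x], reduce L) 1)"

lemma mm_rhs_gel: "mm_rhs (gel F) (gel v) = mm_word F v"
  by (simp add: mm_rhs_def mm_word_def aone_def)

lemma is_linear_mm_rhs: "is_linear (mm_rhs F)"
  unfolding mm_rhs_def
  by (intro is_linear_smult_fun is_linear_add_fun is_linear_diff_fun is_linear_tens_left is_linear_tens_right
      is_linear_comp[OF is_linear_tens_right] is_linear_comp[OF is_linear_tens_left]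
      is_linear_amul_left is_linear_amul_right)

text \<open>In \<open>{{L\<^sub>1 L\<^sub>2, x}}\<close> the cross terms telescope: all letters of \<open>L\<^sub>1\<close> come before \<open>x\<close>,
  all letters of \<open>L\<^sub>2\<close> after it, and the block of \<open>x\<close> itself produces the moment map pattern.\<close>

lemma cross_word_append:
  "act [] L' [] [] (cross_word L x) + act [] [] L [] (cross_word L' x) = cross_word (L @ L') x"
  unfolding cross_word_def
  by (simp add: act_smult act_add act_diff act_single_reduce reduce_append_simps gmul_def
      smult_add_right[symmetric] smult_diff_right[symmetric] algebra_simps)

lemma mm_word_append_before:
  "act [] L' [] [] (cross_word L x) + act [] [] L [] (mm_word (reduce L') [pos x]) =
     mm_word (reduce (L @ L')) [pos x]"
  unfolding cross_word_def mm_word_def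
  by (simp add: act_smult act_add act_diff act_single_reduce reduce_append_simps gmul_def
      smult_add_right[symmetric] smult_diff_right[symmetric] algebra_simps)

lemma mm_word_append_after:
  "act [] L' [] [] (mm_word (reduce L) [pos x]) - act [] [] L [] (cross_word L' x) =
     mm_word (reduce (L @ L')) [pos x]"
  unfolding cross_word_def mm_word_def
  by (simp add: act_smult act_add act_diff act_single_reduce reduce_append_simps gmul_def
      smult_add_right[symmetric] smult_diff_right[symmetric] algebra_simps)

lemma letter_bracket_before: "block_less y x \<Longrightarrow> letter_bracket (y, t) (pos x) = cross_word [(y, t)] x"
  using block_less_irrefl[of y x]
  by (cases t) (simp_all add: letter_bracket_def inv_part_def letter_sign_def gen_bracket_less cross_word_def
      act_smult act_add act_diff act_single_reduce reduce_def gmul_def inv_letter_def smult_add_right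
      smult_diff_right single_uminus algebra_simps)

lemma letter_bracket_after: "block_less x y \<Longrightarrow> letter_bracket (y, t) (pos x) = - cross_word [(y, t)] x"
  using block_less_irrefl[of x y]
  by (cases t) (simp_all add: letter_bracket_def inv_part_def letter_sign_def gen_bracket_greater cross_word_def
      act_smult act_add act_diff act_single_reduce reduce_def gmul_def inv_letter_def smult_add_right
      smult_diff_right single_uminus algebra_simps)

lemma cross_word_Nil [simp]: "cross_word [] x = 0"
  by (simp add: cross_word_def gmul_def)

lemma word_bracket_before:
  assumes "\<forall>l\<in>set L. block_less (fst l) x"
  shows "word_bracket L [pos x] = (cross_word L x :: _ \<Rightarrow>\<^sub>0 'k::field)"
  using assms
proof (induct L)
  case (Cons l L)
  have "word_bracket ([l] @ L) [pos x] =
      act [] L [] [] (letter_bracket l (pos x)) + act [] [] [l] [] (word_bracket L [pos x] :: _ \<Rightarrow>\<^sub>0 'k)"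
    by (simp only: word_bracket_append_left word_bracket_single letter_word_bracket_single)
  also have "\<dots> = act [] L [] [] (cross_word [l] x) + act [] [] [l] [] (cross_word L x)"
    using Cons by (cases l) (simp add: letter_bracket_before)
  also have "\<dots> = cross_word ([l] @ L) x"
    by (rule cross_word_append)
  finally show ?case by simp
qed simp

lemma word_bracket_after:
  assumes "\<forall>l\<in>set L. block_less x (fst l)"
  shows "word_bracket L [pos x] = - (cross_word L x :: _ \<Rightarrow>\<^sub>0 'k::field)"
  using assms
proof (induct L)
  case (Cons l L)
  have "word_bracket ([l] @ L) [pos x] =
      act [] L [] [] (letter_bracket l (pos x)) + act [] [] [l] [] (word_bracket L [pos x] :: _ \<Rightarrow>\<^sub>0 'k)"
    by (simp only: word_bracket_append_left word_bracket_single letter_word_bracket_single)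
  also have "\<dots> = - (act [] L [] [] (cross_word [l] x) + act [] [] [l] [] (cross_word L x))"
    using Cons by (cases l) (simp add: letter_bracket_after act_uminus)
  also have "\<dots> = - cross_word ([l] @ L) x"
    by (simp only: cross_word_append)
  finally show ?case by simp
qed simp

definition handle_word :: "nat \<Rightarrow> gword" where
  "handle_word i = [(Al i, True), (Be i, True), (Al i, False), (Be i, False)]"

lemma word_bracket_handle_word:
  assumes "x = Al i \<or> x = Be i"
  shows "word_bracket (handle_word i) [pos x] = mm_word (handle_word i) [pos x]"
  using assms unfolding handle_word_def mm_word_def
  by (elim disjE) (simp_all add: letter_bracket_def inv_part_def letter_sign_def gen_bracket_self gen_bracket_alpha_beta
      gen_bracket_beta_alpha self_sign_def act_smult act_add act_diff act_uminus act_single_reduce reduce_def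
      gmul_def inv_letter_def smult_add_right smult_diff_right single_uminus algebra_simps)

definition phi_letters :: "nat \<Rightarrow> nat \<Rightarrow> gword" where
  "phi_letters g r = concat (map handle_word [1..<Suc g]) @ map (\<lambda>k. (Ga k, True)) [1..<Suc r]"

lemma phi_word_eq: "phi_word g r = reduce (phi_letters g r)"
proof -
  have "map (\<lambda>i. [(Al i, True), (Be i, True), (Al i, False), (Be i, False)]) [1..<Suc g] =
      map handle_word [1..<Suc g]"
    by (simp add: handle_word_def)
  then show ?thesis
    by (simp only: phi_word_def phi_letters_def)
qed

lemma upt_split_at: "1 \<le> k \<Longrightarrow> k \<le> r \<Longrightarrow> [1..<Suc r] = [1..<k] @ k # [Suc k..<Suc r]"
  by (metis Suc_le_mono le_SucI upt_add_eq_append upt_conv_Cons le_add_diff_inverse lessI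
      Suc_le_lessD le_Suc_eq)

lemma word_bracket_split:
  assumes "\<forall>l\<in>set L. block_less (fst l) x" "\<forall>l\<in>set L'. block_less x (fst l)"
    and "word_bracket M [pos x] = (mm_word M [pos x] :: _ \<Rightarrow>\<^sub>0 'k::field)" "reduced M"
  shows "word_bracket (L @ M @ L') [pos x] = (mm_word (reduce (L @ M @ L')) [pos x] :: _ \<Rightarrow>\<^sub>0 'k)"
proof -
  have "word_bracket (M @ L') [pos x] =
      act [] L' [] [] (word_bracket M [pos x]) + act [] [] M [] (word_bracket L' [pos x] :: _ \<Rightarrow>\<^sub>0 'k)"
    by (rule word_bracket_append_left)
  also have "\<dots> = act [] L' [] [] (mm_word (reduce M) [pos x]) - act [] [] M [] (cross_word L' x)"
    using assms by (simp add: word_bracket_after act_uminus)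
  also have "\<dots> = mm_word (reduce (M @ L')) [pos x]"
    by (rule mm_word_append_after)
  finally have "word_bracket (L @ M @ L') [pos x] =
      act [] (M @ L') [] [] (cross_word L x) + act [] [] L [] (mm_word (reduce (M @ L')) [pos x] :: _ \<Rightarrow>\<^sub>0 'k)"
    using assms by (simp add: word_bracket_append_left[of L] word_bracket_before)
  also have "\<dots> = mm_word (reduce (L @ M @ L')) [pos x]"
    by (rule mm_word_append_before)
  finally show ?thesis .
qed

lemma word_bracket_self: "\<not> is_beta x \<Longrightarrow> word_bracket [pos x] [pos x] = mm_word [pos x] [pos x]"
  unfolding mm_word_def
  by (simp add: word_bracket_single letter_word_bracket_single gen_bracket_self self_sign_def act_diff
      act_single_reduce reduce_def gmul_def inv_letter_def smult_add_right smult_diff_right single_uminus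
      algebra_simps)

lemma phi_letters_split:
  assumes "x \<in> gens g r"
  obtains L M L' where "phi_letters g r = L @ M @ L'"
    "\<forall>l\<in>set L. block_less (fst l) x" "\<forall>l\<in>set L'. block_less x (fst l)"
    "M = [pos x] \<and> \<not> is_beta x \<or> (\<exists>i. M = handle_word i \<and> (x = Al i \<or> x = Be i))"
proof -
  have handle_letters: "fst l = Al j \<or> fst l = Be j" if "l \<in> set (handle_word j)" for l j
    using that by (auto simp: handle_word_def)
  consider (handle) i where "1 \<le> i" "i \<le> g" "x = Al i \<or> x = Be i"
    | (boundary) k where "1 \<le> k" "k \<le> r" "x = Ga k"
    using assms by (auto simp: gens_def)
  then show ?thesis
  proof cases
    case handle
    let ?L = "concat (map handle_word [1..<i])"
    let ?L' = "concat (map handle_word [Suc i..<Suc g]) @ map (\<lambda>k. (Ga k, True)) [1..<Suc r]"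
    have "phi_letters g r = ?L @ handle_word i @ ?L'"
      unfolding phi_letters_def upt_split_at[OF handle(1,2)] by simp
    moreover have "\<forall>l\<in>set ?L. block_less (fst l) x"
      using handle(3) by (auto simp: block_less_def dest!: handle_letters)
    moreover have "\<forall>l\<in>set ?L'. block_less x (fst l)"
      using handle(3) by (auto simp: block_less_def dest!: handle_letters)
    ultimately show ?thesis
      using handle(3) by (intro that[of ?L "handle_word i" ?L']) auto
  next
    case boundary
    let ?L = "concat (map handle_word [1..<Suc g]) @ map (\<lambda>k. (Ga k, True)) [1..<k]"
    let ?L' = "map (\<lambda>k. (Ga k, True)) [Suc k..<Suc r]"
    have "phi_letters g r = ?L @ [pos x] @ ?L'"
      unfolding phi_letters_def upt_split_at[OF boundary(1,2)] boundary(3) by simp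
    moreover have "\<forall>l\<in>set ?L. block_less (fst l) x"
      using boundary(3) by (auto simp: block_less_def dest!: handle_letters)
    moreover have "\<forall>l\<in>set ?L'. block_less x (fst l)"
      using boundary(3) by (auto simp: block_less_def)
    ultimately show ?thesis
      using boundary(3) by (intro that[of ?L "[pos x]" ?L']) simp_all
  qed
qed

lemma word_bracket_phi_word:
  assumes "x \<in> gens g r"
  shows "word_bracket (phi_word g r) [pos x] = (mm_word (phi_word g r) [pos x] :: _ \<Rightarrow>\<^sub>0 'k::field)"
proof -
  obtain L M L' where split: "phi_letters g r = L @ M @ L'"
    "\<forall>l\<in>set L. block_less (fst l) x" "\<forall>l\<in>set L'. block_less x (fst l)"
    and middle: "M = [pos x] \<and> \<not> is_beta x \<or> (\<exists>i. M = handle_word i \<and> (x = Al i \<or> x = Be i))"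
    using phi_letters_split[OF assms] .
  have "word_bracket M [pos x] = (mm_word M [pos x] :: _ \<Rightarrow>\<^sub>0 'k) \<and> reduced M"
    using middle
  proof
    assume "M = [pos x] \<and> \<not> is_beta x"
    then show ?thesis using word_bracket_self[of x] by auto
  next
    assume "\<exists>i. M = handle_word i \<and> (x = Al i \<or> x = Be i)"
    then obtain i where "M = handle_word i" "x = Al i \<or> x = Be i" by blast
    then show ?thesis
      using word_bracket_handle_word[of x i] by (simp add: handle_word_def reduced_Cons_Cons inv_letter_def)
  qed
  then show ?thesis
    using split by (simp add: phi_word_eq word_bracket_reduce_left word_bracket_split)
qed

definition mm_defect :: "gword \<Rightarrow> gword \<Rightarrow> (gword \<times> gword \<Rightarrow>\<^sub>0 'k::field)" where
  "mm_defect F v = word_bracket F v - mm_word F v"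

lemma mm_word_gmul:
  assumes "reduced F" "reduced v" "reduced w"
  shows "mm_word F (gmul v w) = act [] [] [] w (mm_word F v) + act v [] [] [] (mm_word F w)"
  unfolding mm_word_def act_smult smult_add_right[symmetric]
  using assms by (simp add: act_add act_diff gmul_assoc algebra_simps)

lemma mm_defect_gmul:
  assumes "reduced F" "reduced v" "reduced w"
  shows "mm_defect F (gmul v w) = act [] [] [] w (mm_defect F v) + act v [] [] [] (mm_defect F w)"
  unfolding mm_defect_def mm_word_gmul[OF assms] word_bracket_gmul_right
  by (simp add: act_diff algebra_simps)

lemma reduced2_mm_defect: "reduced F \<Longrightarrow> reduced v \<Longrightarrow> reduced2 (mm_defect F v)"
  by (simp add: mm_defect_def mm_word_def)

lemma mm_defect_zero:
  assumes F: "reduced F" and letters: "\<And>y. y \<in> S \<Longrightarrow> mm_defect F [pos y] = (0 :: _ \<Rightarrow>\<^sub>0 'k::field)"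
    and w: "reduced w" "fst ` set w \<subseteq> S"
  shows "mm_defect F w = (0 :: _ \<Rightarrow>\<^sub>0 'k)"
proof (rule outer_derivation_zero[where right = "\<lambda>w. act [] [] [] w" and left = "\<lambda>v. act v [] [] []"])
  show "act [] [] [] [(y, False)] (act [] [] [] [pos y] (mm_defect F [(y, False)])) =
      (mm_defect F [(y, False)] :: _ \<Rightarrow>\<^sub>0 'k)" for y
  proof -
    have "act [] [] [] [(y, False)] (act [] [] [] [pos y] (mm_defect F [(y, False)])) =
        act [] [] [] [] (mm_defect F [(y, False)] :: _ \<Rightarrow>\<^sub>0 'k)"
      unfolding act_act using reduce_pair_cancel(1)[of "pos y"]
      by (intro act_cong) (simp_all add: inv_letter_def)
    then show ?thesis
      using F by (simp add: act_Nil reduced2_mm_defect)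
  qed
  show "mm_defect F (gmul v w') = act [] [] [] w' (mm_defect F v) + act v [] [] [] (mm_defect F w')"
    if "reduced v" "reduced w'" for v w'
    using F that by (rule mm_defect_gmul)
  show "mm_defect F [] = 0"
    using F by (simp add: mm_defect_def mm_word_def)
qed (use letters w in simp_all)

theorem surface_bracket_Phi:
  assumes "a \<in> algA g r"
  shows "surface_bracket (Phi g r) a = (mm_rhs (Phi g r) a :: _ \<Rightarrow>\<^sub>0 'k::field)"
proof -
  have F: "reduced (phi_word g r)" by (simp add: phi_word_eq)
  have "mm_defect (phi_word g r) u = (0 :: _ \<Rightarrow>\<^sub>0 'k)" if "u \<in> Poly_Mapping.keys a" for u
  proof (rule mm_defect_zero[OF F])
    show "mm_defect (phi_word g r) [pos y] = (0 :: _ \<Rightarrow>\<^sub>0 'k)" if "y \<in> gens g r" for y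
      by (simp add: mm_defect_def word_bracket_phi_word[OF that])
  qed (use assms that in \<open>auto simp: algA_def\<close>)
  then have words: "surface_bracket (Phi g r) (Poly_Mapping.single u 1) =
      (mm_rhs (Phi g r) (Poly_Mapping.single u 1) :: _ \<Rightarrow>\<^sub>0 'k)" if "u \<in> Poly_Mapping.keys a" for u
    using that by (simp add: Phi_def mm_rhs_gel mm_defect_def flip: gel_def)
  have "surface_bracket (Phi g r) a = lin_ext (\<lambda>u. surface_bracket (Phi g r) (Poly_Mapping.single u 1)) a"
    by (rule is_linear_expand) (rule is_linear_surface_bracket_right)
  also have "\<dots> = lin_ext (\<lambda>u. mm_rhs (Phi g r) (Poly_Mapping.single u 1)) a"
    by (rule lin_ext_cong) (rule words)
  also have "\<dots> = mm_rhs (Phi g r) a"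
    by (rule is_linear_expand[symmetric]) (rule is_linear_mm_rhs)
  finally show ?thesis .
qed

lemma gel_in_algA: "reduced w \<Longrightarrow> fst ` set w \<subseteq> gens g r \<Longrightarrow> gel w \<in> algA g r"
  by (simp add: algA_def gel_def)

lemma phi_word_gens: "fst ` set (phi_word g r) \<subseteq> gens g r"
proof -
  have "fst ` set (phi_letters g r) \<subseteq> gens g r"
    by (auto simp: phi_letters_def gens_def handle_word_def)
  then show ?thesis
    using set_reduce[of "phi_letters g r"] by (auto simp: phi_word_eq)
qed

theorem mult_moment_map_Phi: "mult_moment_map_on (algA g r) surface_bracket (Phi g r :: _ \<Rightarrow>\<^sub>0 'k::field)"
  unfolding mult_moment_map_on_def
proof (intro conjI ballI bexI)
  have F: "reduced (phi_word g r)" by (simp add: phi_word_eq)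
  show "Phi g r \<in> algA g r"
    unfolding Phi_def by (rule gel_in_algA[OF F phi_word_gens])
  show "gel (inv_word (phi_word g r)) \<in> (algA g r :: (_ \<Rightarrow>\<^sub>0 'k) set)"
    using phi_word_gens[of g r] reduced_inv_word[OF F]
    by (intro gel_in_algA) (auto simp: inv_word_def inv_letter_def)
  show "amul (Phi g r) (gel (inv_word (phi_word g r))) = (aone :: _ \<Rightarrow>\<^sub>0 'k)"
    "amul (gel (inv_word (phi_word g r))) (Phi g r) = (aone :: _ \<Rightarrow>\<^sub>0 'k)"
    by (simp_all add: Phi_def aone_def gmul_inv_word gmul_inv_word_left)
qed (rule surface_bracket_Phi)

lemma surface_bracket_gens: "surface_bracket (gel [pos x]) (gel [pos y]) = gen_bracket x y"
  by (simp add: word_bracket_single letter_word_bracket_single act_Nil)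

lemma surface_bracket_self:
  "surface_bracket (gel [pos x]) (gel [pos x]) = smult (self_sign x) (self_val (gel [pos x]))"
  unfolding surface_bracket_gens by (simp add: gen_bracket_self self_val_def aone_def gmul_positive)

lemma surface_bracket_less:
  "block_less x y \<Longrightarrow> surface_bracket (gel [pos x]) (gel [pos y]) = cross_val (gel [pos x]) (gel [pos y])"
  unfolding surface_bracket_gens
  by (simp add: gen_bracket_less cross_val_def aone_def gmul_positive single_uminus algebra_simps)

lemma surface_bracket_alpha_beta:
  "surface_bracket (alpha i) (beta i) = smult (1/2)
     (tens (amul (beta i) (alpha i)) aone + tens aone (amul (alpha i) (beta i))
      - tens (alpha i) (beta i) + tens (beta i) (alpha i))"
  unfolding alpha_def beta_def surface_bracket_gens
  by (simp add: gen_bracket_alpha_beta aone_def gmul_positive)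

theorem theorem3p5:
  fixes g r :: nat
  shows "\<exists>B :: ('k::field_char_0) dbracket.
    double_bracket_on (algA g r) B \<and>
    (\<forall>i. 1 \<le> i \<and> i \<le> g \<longrightarrow>
       B (alpha i) (alpha i) = self_val (alpha i) \<and>
       B (beta i) (beta i) = - self_val (beta i) \<and>
       B (alpha i) (beta i) = smult (1/2)
          (tens (amul (beta i) (alpha i)) aone + tens aone (amul (alpha i) (beta i))
           - tens (alpha i) (beta i) + tens (beta i) (alpha i))) \<and>
    (\<forall>i j. 1 \<le> i \<and> i < j \<and> j \<le> g \<longrightarrow>
       (\<forall>x\<in>{alpha i, beta i}. \<forall>y\<in>{alpha j, beta j}. B x y = cross_val x y)) \<and>
    (\<forall>i k. 1 \<le> i \<and> i \<le> g \<and> 1 \<le> k \<and> k \<le> r \<longrightarrow>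
       (\<forall>x\<in>{alpha i, beta i}. B x (gamma k) = cross_val x (gamma k))) \<and>
    (\<forall>k. 1 \<le> k \<and> k \<le> r \<longrightarrow> B (gamma k) (gamma k) = self_val (gamma k)) \<and>
    (\<forall>k l. 1 \<le> k \<and> k < l \<and> l \<le> r \<longrightarrow> B (gamma k) (gamma l) = cross_val (gamma k) (gamma l)) \<and>
    (\<forall>a\<in>{alpha i | i. 1 \<le> i \<and> i \<le> g} \<union> {beta i | i. 1 \<le> i \<and> i \<le> g}
          \<union> {gamma k | k. 1 \<le> k \<and> k \<le> r}.
       B (Phi g r) a = mm_rhs (Phi g r) a) \<and>
    quasi_poisson_on (algA g r) B \<and>
    mult_moment_map_on (algA g r) B (Phi g r)"
proof (intro exI[of _ surface_bracket] conjI allI impI ballI)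
  show "double_bracket_on (algA g r) (surface_bracket :: 'k dbracket)"
    by (rule double_bracket_surface_bracket)
  show "quasi_poisson_on (algA g r) (surface_bracket :: 'k dbracket)"
    by (rule quasi_poisson_surface_bracket)
  show "mult_moment_map_on (algA g r) (surface_bracket :: 'k dbracket) (Phi g r)"
    by (rule mult_moment_map_Phi)
  show "surface_bracket (alpha i) (beta i) = smult (1/2)
      (tens (amul (beta i) (alpha i)) aone + tens aone (amul (alpha i) (beta i))
       - tens (alpha i) (beta i) + (tens (beta i) (alpha i) :: _ \<Rightarrow>\<^sub>0 'k))" for i
    by (rule surface_bracket_alpha_beta)
  fix a :: "_ \<Rightarrow>\<^sub>0 'k" assume "a \<in> {alpha i | i. 1 \<le> i \<and> i \<le> g} \<union> {beta i | i. 1 \<le> i \<and> i \<le> g}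
      \<union> {gamma k | k. 1 \<le> k \<and> k \<le> r}"
  then show "surface_bracket (Phi g r) a = mm_rhs (Phi g r) a"
    by (intro surface_bracket_Phi) (auto simp: alpha_def beta_def gamma_def gens_def intro!: gel_in_algA)
qed (auto simp: alpha_def beta_def gamma_def surface_bracket_self self_sign_def block_less_def
    smult_minus_one simp del: surface_bracket_gel intro!: surface_bracket_less)

end
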